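(* Suppose Assumption 1 (context) holds, let $u^*$ be any minimizer of $D$, and let $0\le K_0\le K$ be integers. For ARDCA as in the context, define $\hat x^K=\frac{\sum_{k=K_0}^Kx^*(v^k)/\theta_k}{\sum_{k=K_0}^K1/\theta_k}$ and $\hat y^K=\frac{\sum_{k=K_0}^Kny^k/\theta_k}{\sum_{k=K_0}^K1/\theta_k}$. Then for any deterministic $u\in\mathbb{D}$ (not depending on $\xi_K$), $$\left(\frac1{\theta_K^2}-\frac1{\theta_{K_0-1}^2}\right)\mathbb{E}_{\xi_K}\left[\langle\triangle(\hat x^K,\hat y^K),u\rangle+D(u^* )+f(\hat x^K)+\frac1n\phi(\hat y^K)\right]\le2(\widehat n^2-\widehat n)(D(u^0)-D(u^* ))+2\widehat n^2\|u^0-u^*\|_L^2+2\widehat n^2\|u-u^*\|_L^2.$$ Moreover, with $R_0=(1-\theta_0)(D(u^0)-D(u^* ))+\|u^0-u^*\|_L^2$, $$\frac12\sum_{k=K_0}^K\mathbb{E}_{\xi_K}[\|z^{k+1}-z^k\|_L^2]\le R_0,\qquad\mathbb{E}_{\xi_K}[\|z^{K+1}-u^*\|_L^2]\le R_0,$$ $$\frac{\mathbb{E}_{\xi_K}[D(u^{K+1})]-D(u^* )}{\theta_K^2}+\widehat n^2\mathbb{E}_{\xi_K}[\|z^{K+1}-u^*\|_L^2]\le\widehat n^2R_0.$$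
   Context: Data: integers $n,t\ge1$, $p,m\ge0$; $A\in\mathbb{R}^{t\times n}$ (columns $A_j$), $B\in\mathbb{R}^{p\times t}$ (rows $B_{j,:}$), $b\in\mathbb{R}^p$; $f:\mathbb{R}^t\to\mathbb{R}$, $\phi_i:\mathbb{R}\to\mathbb{R}$, $g_i:\mathbb{R}^t\to\mathbb{R}$. Primal problem: minimize $f(x)+\frac1n\sum_i\phi_i(A_i^Tx)$ s.t. $Bx+b=0$, $g_i(x)\le0$. Assumption 1: $f$ $\mu$-strongly convex ($\mu>0$); $\phi_i$ convex and $M$-Lipschitz; $g_i$ convex with subgradients of norm $\le L_{g_i}$; a Slater point exists; finite optimal value. Dual: $\widehat n=n+p+m$, $\mathbb{D}=\{u:u_{n+p+1},\dots,u_{\widehat n}\ge0\}$, $L_f(x,u)=f(x)+\langle u_{1:n},A^Tx/n\rangle+\langle u_{n+1:n+p},Bx+b\rangle+\sum_iu_{n+p+i}g_i(x)$, $x^*(u)=\arg\min_xL_f(x,u)$, $d(u)=-L_f(x^*(u),u)$, $\nabla d(u)=-[(A^Tx^*(u)/n)^T,(Bx^*(u)+b)^T,g(x^*(u))^T]^T$; $h_i=\frac1n\phi_i^*$ ($i\le n$), $h_i\equiv0$ ($n<i\le n+p$), $h_i$ = indicator of $[0,\infty)$ ($i>n+p$); $D(u)=d(u)+\sum_ih_i(u_i)$. $L_j=\|A_j\|^2/(n^2\mu)$ ($j\le n$), $\|B_{j-n,:}\|^2/\mu$ ($n<j\le n+p$), $L_{g_{j-n-p}}^2/\mu$ ($j>n+p$);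 $\|w\|_L=\sqrt{\sum_iL_iw_i^2}$. ARDCA: $\theta_0=1/\widehat n$, $\theta_{k+1}=\frac{\sqrt{\theta_k^4+4\theta_k^2}-\theta_k^2}{2}$, with the convention $1/\theta_{-1}^2=\widehat n^2-\widehat n$; $z^0=u^0\in\mathbb{D}$; for $k\ge0$: $v^k=\theta_kz^k+(1-\theta_k)u^k$; $\tilde z_i^k=\arg\min_w\widehat n\theta_kL_i(w-z_i^k)^2+\nabla_id(v^k)(w-z_i^k)+h_i(w)$ for each $i$; $i_k$ uniform on $\{1,\dots,\widehat n\}$, independent; $z^{k+1}_{i_k}=\tilde z^k_{i_k}$, other coordinates unchanged; $u^{k+1}=v^k+\widehat n\theta_k(z^{k+1}-z^k)$. $y_i^k=-2\widehat n\theta_kL_i(\tilde z_i^k-z_i^k)-\nabla_id(v^k)$ ($i\le n$). $\xi_K=\{i_0,\dots,i_K\}$. $\triangle(x,y)=[(A^Tx-y)^T/n,(Bx+b)^T,g_1(x),\dots,g_m(x)]^T$, $\phi(y)=\sum_{i=1}^n\phi_i(y_i)$. *)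

theory Defs
  imports "HOL-Analysis.Analysis"
begin

(* Dual coordinates are 0-based: i < n (phi block), n <= i < n+p (equality block),
   n+p <= i < n+p+m (inequality block).  Vectors in R^n, R^p, R^m, R^nhat are
   represented as nat => real, only the coordinates below the dimension matter. *)
record ('t::finite) prob =
  nn :: nat
  pp :: nat
  mm :: nat
  Acol :: "nat \<Rightarrow> real^'t"
  Brow :: "nat \<Rightarrow> real^'t"
  bv   :: "nat \<Rightarrow> real"
  fobj :: "real^'t \<Rightarrow> real"
  phi  :: "nat \<Rightarrow> real \<Rightarrow> real"
  gc   :: "nat \<Rightarrow> real^'t \<Rightarrow> real"
  mu   :: real
  Lg   :: "nat \<Rightarrow> real"

definition strongly_convex :: "real \<Rightarrow> ('a::real_inner \<Rightarrow> real) \<Rightarrow> bool" where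
  "strongly_convex c F \<longleftrightarrow> (\<forall>x y. \<forall>s::real. 0 \<le> s \<and> s \<le> 1 \<longrightarrow>
      F ((1 - s) *\<^sub>R x + s *\<^sub>R y) \<le> (1 - s) * F x + s * F y - c / 2 * s * (1 - s) * (norm (x - y))\<^sup>2)"

definition nhat :: "'t::finite prob \<Rightarrow> nat" where
  "nhat P = nn P + pp P + mm P"

definition Lc :: "'t::finite prob \<Rightarrow> nat \<Rightarrow> real" where
  "Lc P j = (if j < nn P then (norm (Acol P j))\<^sup>2 / ((real (nn P))\<^sup>2 * mu P)
             else if j < nn P + pp P then (norm (Brow P (j - nn P)))\<^sup>2 / mu P
             else (Lg P (j - nn P - pp P))\<^sup>2 / mu P)"

definition Lnorm_sq :: "'t::finite prob \<Rightarrow> (nat \<Rightarrow> real) \<Rightarrow> real" where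
  "Lnorm_sq P w = (\<Sum>i<nhat P. Lc P i * (w i)\<^sup>2)"

definition Lagr :: "'t::finite prob \<Rightarrow> real^'t \<Rightarrow> (nat \<Rightarrow> real) \<Rightarrow> real" where
  "Lagr P x u = fobj P x + (\<Sum>i<nn P. u i * ((Acol P i \<bullet> x) / real (nn P)))
     + (\<Sum>j<pp P. u (nn P + j) * (Brow P j \<bullet> x + bv P j))
     + (\<Sum>i<mm P. u (nn P + pp P + i) * gc P i x)"

definition xstar :: "'t::finite prob \<Rightarrow> (nat \<Rightarrow> real) \<Rightarrow> real^'t" where
  "xstar P u = (SOME x. \<forall>y. Lagr P x u \<le> Lagr P y u)"

definition dfun :: "'t::finite prob \<Rightarrow> (nat \<Rightarrow> real) \<Rightarrow> real" where
  "dfun P u = - Lagr P (xstar P u) u"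

definition gradd :: "'t::finite prob \<Rightarrow> (nat \<Rightarrow> real) \<Rightarrow> nat \<Rightarrow> real" where
  "gradd P u i = (let x = xstar P u in
     if i < nn P then - ((Acol P i \<bullet> x) / real (nn P))
     else if i < nn P + pp P then - (Brow P (i - nn P) \<bullet> x + bv P (i - nn P))
     else - gc P (i - nn P - pp P) x)"

definition conjugate :: "(real \<Rightarrow> real) \<Rightarrow> real \<Rightarrow> ereal" where
  "conjugate F s = (SUP y. ereal (s * y - F y))"

definition hfun :: "'t::finite prob \<Rightarrow> nat \<Rightarrow> real \<Rightarrow> ereal" where
  "hfun P i w = (if i < nn P then conjugate (phi P i) w / ereal (real (nn P))
                 else if i < nn P + pp P then 0
                 else (if 0 \<le> w then 0 else \<infinity>))"

definition Dfun :: "'t::finite prob \<Rightarrow> (nat \<Rightarrow> real) \<Rightarrow> ereal" where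
  "Dfun P u = ereal (dfun P u) + (\<Sum>i<nhat P. hfun P i (u i))"

definition in_dom :: "'t::finite prob \<Rightarrow> (nat \<Rightarrow> real) \<Rightarrow> bool" where
  "in_dom P u \<longleftrightarrow> (\<forall>i. nn P + pp P \<le> i \<and> i < nhat P \<longrightarrow> 0 \<le> u i)"

fun theta :: "'t::finite prob \<Rightarrow> nat \<Rightarrow> real" where
  "theta P 0 = 1 / real (nhat P)"
| "theta P (Suc k) = (sqrt ((theta P k)^4 + 4 * (theta P k)\<^sup>2) - (theta P k)\<^sup>2) / 2"

(* 1/theta_{k-1}^2 with the convention 1/theta_{-1}^2 = nhat^2 - nhat *)
definition inv_theta_sq_prev :: "'t::finite prob \<Rightarrow> nat \<Rightarrow> real" where
  "inv_theta_sq_prev P k = (if k = 0 then (real (nhat P))\<^sup>2 - real (nhat P)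
                            else 1 / (theta P (k - 1))\<^sup>2)"

definition ztil :: "'t::finite prob \<Rightarrow> nat \<Rightarrow> (nat \<Rightarrow> real) \<Rightarrow> (nat \<Rightarrow> real) \<Rightarrow> nat \<Rightarrow> real" where
  "ztil P k v z i = (if i < nhat P then
     (SOME w. \<forall>w'.
        ereal (real (nhat P) * theta P k * Lc P i * (w - z i)\<^sup>2 + gradd P v i * (w - z i)) + hfun P i w
      \<le> ereal (real (nhat P) * theta P k * Lc P i * (w' - z i)\<^sup>2 + gradd P v i * (w' - z i)) + hfun P i w')
     else z i)"

(* ARDCA iterates (u^k, z^k) along the index sequence s = (i_0, i_1, ...) *)
fun ardca :: "'t::finite prob \<Rightarrow> (nat \<Rightarrow> real) \<Rightarrow> (nat \<Rightarrow> nat) \<Rightarrow> nat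
              \<Rightarrow> (nat \<Rightarrow> real) \<times> (nat \<Rightarrow> real)" where
  "ardca P u0 s 0 = (u0, u0)"
| "ardca P u0 s (Suc k) =
     (let (u, z) = ardca P u0 s k;
          v = (\<lambda>i. theta P k * z i + (1 - theta P k) * u i);
          zt = ztil P k v z;
          z' = z(s k := zt (s k));
          u' = (\<lambda>i. v i + real (nhat P) * theta P k * (z' i - z i))
      in (u', z'))"

definition u_it where "u_it P u0 s k = fst (ardca P u0 s k)"
definition z_it where "z_it P u0 s k = snd (ardca P u0 s k)"
definition v_it where
  "v_it P u0 s k = (\<lambda>i. theta P k * z_it P u0 s k i + (1 - theta P k) * u_it P u0 s k i)"
definition zt_it where
  "zt_it P u0 s k = ztil P k (v_it P u0 s k) (z_it P u0 s k)"

definition y_it :: "'t::finite prob \<Rightarrow> (nat \<Rightarrow> real) \<Rightarrow> (nat \<Rightarrow> nat) \<Rightarrow> nat \<Rightarrow> nat \<Rightarrow> real" where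
  "y_it P u0 s k i = - 2 * real (nhat P) * theta P k * Lc P i * (zt_it P u0 s k i - z_it P u0 s k i)
                     - gradd P (v_it P u0 s k) i"

definition xhat :: "'t::finite prob \<Rightarrow> (nat \<Rightarrow> real) \<Rightarrow> (nat \<Rightarrow> nat) \<Rightarrow> nat \<Rightarrow> nat \<Rightarrow> real^'t" where
  "xhat P u0 s K0 K = (1 / (\<Sum>k=K0..K. 1 / theta P k)) *\<^sub>R
      (\<Sum>k=K0..K. (1 / theta P k) *\<^sub>R xstar P (v_it P u0 s k))"

definition yhat :: "'t::finite prob \<Rightarrow> (nat \<Rightarrow> real) \<Rightarrow> (nat \<Rightarrow> nat) \<Rightarrow> nat \<Rightarrow> nat \<Rightarrow> nat \<Rightarrow> real" where
  "yhat P u0 s K0 K i = (\<Sum>k=K0..K. real (nn P) * y_it P u0 s k i / theta P k)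
                        / (\<Sum>k=K0..K. 1 / theta P k)"

definition delta_inner :: "'t::finite prob \<Rightarrow> real^'t \<Rightarrow> (nat \<Rightarrow> real) \<Rightarrow> (nat \<Rightarrow> real) \<Rightarrow> real" where
  "delta_inner P x y u = (\<Sum>i<nn P. ((Acol P i \<bullet> x - y i) / real (nn P)) * u i)
     + (\<Sum>j<pp P. (Brow P j \<bullet> x + bv P j) * u (nn P + j))
     + (\<Sum>i<mm P. gc P i x * u (nn P + pp P + i))"

definition phisum :: "'t::finite prob \<Rightarrow> (nat \<Rightarrow> real) \<Rightarrow> real" where
  "phisum P y = (\<Sum>i<nn P. phi P i (y i))"

(* xi_K = (i_0,...,i_K), i.i.d. uniform on {0..<nhat}; expectation = average *)
definition seqs :: "'t::finite prob \<Rightarrow> nat \<Rightarrow> (nat \<Rightarrow> nat) set" where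
  "seqs P K = PiE {0..K} (\<lambda>_. {..<nhat P})"

definition Exp :: "'t::finite prob \<Rightarrow> nat \<Rightarrow> ((nat \<Rightarrow> nat) \<Rightarrow> ereal) \<Rightarrow> ereal" where
  "Exp P K F = (\<Sum>s\<in>seqs P K. F s) / ereal (real (card (seqs P K)))"

end

theory Submission
  imports Defs
begin

(* ARDCA is accelerated randomized proximal coordinate descent on the dual D = d + h: d is convex
   and coordinate-wise L_i-smooth because f is mu-strongly convex and the coupling functions are
   Lipschitz.  Averaging one step over the fresh index i_k gives the accelerated descent inequality
     E Psi_{k+1} + nhat^2/2 E ||z^{k+1} - z^k||_L^2 \<le> Psi_k + (T_k(w) - D(ustar)) / theta_k,
     Psi_k = (1/theta_{k-1}^2) (d(u^k) + hhat_k - D(ustar)) + nhat^2 ||z^k - w||_L^2,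
   where T_k(w) is the linear model of the Lagrangian at xstar(v^k) and of h at the prox points,
   and hhat_k is a convex combination of the values h(z^j) that dominates h(u^k), since u^k is the
   matching convex combination of the z^j.  For w = ustar the extra term is nonpositive, and
   telescoping gives the last three bounds.  For w = u the prox optimality conditions bound
   D(ustar) - T_k(u) below by D(ustar) plus the primal-dual gap at (xstar(v^k), n y^k); convexity of
   that gap in (x, y) turns the 1/theta_k-weighted sum into the gap at the averages (xhat, yhat),
   and the weights sum to 1/theta_K^2 - 1/theta_{K0-1}^2. *)

lemma le_of_forall_scaled_slack:
  fixes A B C :: real
  assumes "\<And>t. 0 < t \<Longrightarrow> t \<le> 1 \<Longrightarrow> A \<le> B + t * C"
  shows "A \<le> B"
proof (rule field_le_epsilon)
  fix e :: real assume e: "0 < e"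
  define t where "t = min 1 (e / (\<bar>C\<bar> + 1))"
  have t0: "0 < t" and t1: "t \<le> 1" using e by (auto simp: t_def)
  have "t * C \<le> t * \<bar>C\<bar>" using t0 by (simp add: mult_left_mono)
  also have "\<dots> \<le> e / (\<bar>C\<bar> + 1) * (\<bar>C\<bar> + 1)"
    by (rule mult_mono) (use e in \<open>auto simp: t_def\<close>)
  also have "\<dots> = e" by simp
  finally show "A \<le> B + e" using assms[OF t0 t1] by linarith
qed

lemma sum_lessThan_add:
  "(\<Sum>i<a+b. F i) = (\<Sum>i<a. F i) + (\<Sum>j<b. F (a+j))" for F :: "nat \<Rightarrow> 'a::comm_monoid_add"
  by (induction b) (simp_all add: add.assoc)

lemma sum_lessThan_add3:
  "(\<Sum>i<a+b+c. F i) = (\<Sum>i<a. F i) + (\<Sum>j<b. F (a+j)) + (\<Sum>i<c. F (a+b+i))" for F :: "nat \<Rightarrow> 'a::comm_monoid_add"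
  by (simp add: sum_lessThan_add)

lemma sum_fun_upd:
  fixes F :: "'i \<Rightarrow> 'b \<Rightarrow> 'a::ab_group_add"
  assumes "i \<in> A" "finite A"
  shows "(\<Sum>j\<in>A. F j ((z(i := a)) j)) = (\<Sum>j\<in>A. F j (z j)) - F i (z i) + F i a"
proof -
  have "(\<Sum>j\<in>A. F j ((z(i := a)) j)) = F i ((z(i := a)) i) + (\<Sum>j\<in>A - {i}. F j ((z(i := a)) j))"
    by (rule sum.remove[OF assms(2,1)])
  also have "(\<Sum>j\<in>A - {i}. F j ((z(i := a)) j)) = (\<Sum>j\<in>A - {i}. F j (z j))"
    by (rule sum.cong) auto
  finally have "(\<Sum>j\<in>A. F j ((z(i := a)) j)) = F i a + (\<Sum>j\<in>A - {i}. F j (z j))" by simp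
  moreover have "(\<Sum>j\<in>A. F j (z j)) = F i (z i) + (\<Sum>j\<in>A - {i}. F j (z j))"
    by (rule sum.remove[OF assms(2,1)])
  ultimately show ?thesis by (simp add: algebra_simps)
qed

lemma mult_le_young:
  fixes a b m :: real
  assumes "0 < m"
  shows "a * b \<le> a\<^sup>2 / (2 * m) + m / 2 * b\<^sup>2"
proof -
  have "0 \<le> (a - m * b)\<^sup>2 / (2 * m)" using assms by simp
  also have "\<dots> = a\<^sup>2 / (2 * m) + m / 2 * b\<^sup>2 - a * b"
    using assms by (simp add: field_simps power2_eq_square)
  finally show ?thesis by simp
qed

section \<open>The step sizes\<close>

lemma theta_step_bounds:
  fixes a :: real
  assumes "0 < a" "a \<le> 1"
  defines "b \<equiv> (sqrt (a^4 + 4 * a\<^sup>2) - a\<^sup>2) / 2"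
  shows "0 < b" "b < 1" "b\<^sup>2 = (1 - b) * a\<^sup>2" "b \<le> a"
proof -
  have sq: "(sqrt (a^4 + 4 * a\<^sup>2))\<^sup>2 = a^4 + 4 * a\<^sup>2" by simp
  have "a\<^sup>2 < sqrt (a^4 + 4 * a\<^sup>2)"
    by (rule real_less_rsqrt) (use assms in \<open>simp add: power_even_eq\<close>)
  then show b0: "0 < b" by (simp add: b_def)
  have "sqrt (a^4 + 4 * a\<^sup>2) < sqrt ((2 + a\<^sup>2)\<^sup>2)"
    by (simp only: real_sqrt_less_iff) (simp add: power2_eq_square power4_eq_xxxx algebra_simps)
  then show "b < 1" by (simp add: b_def)
  have "2 * b = sqrt (a^4 + 4 * a\<^sup>2) - a\<^sup>2" unfolding b_def by simp
  then have "2 * b + a\<^sup>2 = sqrt (a^4 + 4 * a\<^sup>2)" by linarith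
  then have "(2 * b + a\<^sup>2)\<^sup>2 = a^4 + 4 * a\<^sup>2" using sq by simp
  then show eq: "b\<^sup>2 = (1 - b) * a\<^sup>2"
    by (simp add: power2_eq_square power4_eq_xxxx algebra_simps)
  moreover have "0 \<le> b * a\<^sup>2" using b0 by simp
  ultimately have "b\<^sup>2 \<le> a\<^sup>2" by (simp add: algebra_simps)
  then show "b \<le> a" using b0 assms by (simp add: power2_le_iff_abs_le)
qed

declare theta.simps(2)[simp del]

lemma theta_pos_le:
  assumes "1 \<le> nhat P"
  shows "0 < theta P k \<and> theta P k \<le> 1 / real (nhat P)"
proof (induction k)
  case 0
  then show ?case using assms by simp
next
  case (Suc k)
  have "1 / real (nhat P) \<le> 1" using assms by simp
  then show ?case
    using Suc theta_step_bounds(1,4)[of "theta P k"] by (auto simp: theta.simps(2))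
qed

lemma theta_pos: "1 \<le> nhat P \<Longrightarrow> 0 < theta P k"
  using theta_pos_le by blast

lemma theta_le: "1 \<le> nhat P \<Longrightarrow> theta P k \<le> 1 / real (nhat P)"
  using theta_pos_le by blast

lemma nhat_theta_le_1: "1 \<le> nhat P \<Longrightarrow> real (nhat P) * theta P k \<le> 1"
  using theta_le[of P k] by (simp add: field_simps)

lemma theta_le_1: "1 \<le> nhat P \<Longrightarrow> theta P k \<le> 1"
proof -
  assume N: "1 \<le> nhat P"
  then have "1 / real (nhat P) \<le> 1" by simp
  then show ?thesis using theta_le[OF N, of k] by linarith
qed

lemma theta_Suc_sq:
  assumes "1 \<le> nhat P"
  shows "(theta P (Suc k))\<^sup>2 = (1 - theta P (Suc k)) * (theta P k)\<^sup>2"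
  using theta_step_bounds(3)[of "theta P k"] theta_pos[OF assms] theta_le_1[OF assms]
  by (simp add: theta.simps(2))

lemma inv_theta_sq_prev_eq:
  assumes N: "1 \<le> nhat P"
  shows "inv_theta_sq_prev P k = (1 - theta P k) / (theta P k)\<^sup>2"
proof (cases k)
  case 0
  have "real (nhat P) > 0" using N by simp
  then show ?thesis using 0 by (simp add: inv_theta_sq_prev_def field_simps power2_eq_square)
next
  case (Suc j)
  have "theta P (Suc j) < 1"
    using theta_step_bounds(2)[of "theta P j"] theta_pos[OF N] theta_le_1[OF N] by (simp add: theta.simps(2))
  then show ?thesis using Suc by (simp add: inv_theta_sq_prev_def theta_Suc_sq[OF N])
qed

lemma inv_theta_sq_prev_Suc: "inv_theta_sq_prev P (Suc k) = 1 / (theta P k)\<^sup>2"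
  by (simp add: inv_theta_sq_prev_def)

lemma inv_theta_sq_diff:
  assumes N: "1 \<le> nhat P"
  shows "1 / (theta P k)\<^sup>2 - inv_theta_sq_prev P k = 1 / theta P k"
  using theta_pos[OF N, of k] by (simp add: inv_theta_sq_prev_eq[OF N] field_simps power2_eq_square)

lemma inv_theta_sq_prev_nonneg:
  assumes N: "1 \<le> nhat P"
  shows "0 \<le> inv_theta_sq_prev P k"
  using theta_pos[OF N, of k] theta_le_1[OF N, of k] by (simp add: inv_theta_sq_prev_eq[OF N])

lemma sum_inv_theta:
  assumes N: "1 \<le> nhat P" and "K0 \<le> K"
  shows "(\<Sum>k=K0..K. 1 / theta P k) = 1 / (theta P K)\<^sup>2 - inv_theta_sq_prev P K0"
  using assms(2)
proof (induction K)
  case 0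
  then show ?case using inv_theta_sq_diff[OF N, of 0] by simp
next
  case (Suc K)
  show ?case
  proof (cases "K0 = Suc K")
    case True
    then show ?thesis using inv_theta_sq_diff[OF N, of "Suc K"] by simp
  next
    case False
    then have "(\<Sum>k=K0..Suc K. 1 / theta P k) = 1 / (theta P K)\<^sup>2 - inv_theta_sq_prev P K0 + 1 / theta P (Suc K)"
      using Suc by simp
    then show ?thesis using inv_theta_sq_diff[OF N, of "Suc K"] inv_theta_sq_prev_Suc[of P K] by simp
  qed
qed

(* The weight of z^k in the representation of u^k as a convex combination of z^0, ..., z^k. *)
definition z_weight :: "'t::finite prob \<Rightarrow> nat \<Rightarrow> real" where
  "z_weight P k = (if k = 0 then 1 else real (nhat P) * theta P (k - 1))"

lemma z_weight_bounds:
  assumes N: "1 \<le> nhat P"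
  shows "0 \<le> z_weight P k" "z_weight P k \<le> 1"
  using theta_pos[OF N] nhat_theta_le_1[OF N] by (auto simp: z_weight_def less_imp_le)

lemma z_weight_Suc: "z_weight P (Suc k) = real (nhat P) * theta P k"
  by (simp add: z_weight_def)

lemma z_weight_shrink:
  assumes N: "1 \<le> nhat P"
  shows "(real (nhat P) - 1) * theta P k \<le> (1 - theta P k) * z_weight P k"
proof (cases k)
  case 0
  have "real (nhat P) > 0" using N by simp
  then show ?thesis using 0 by (simp add: z_weight_def field_simps)
next
  case (Suc j)
  define t a n where "t = theta P (Suc j)" and "a = theta P j" and "n = real (nhat P)"
  have t0: "0 < t" and a0: "0 < a" and n1: "1 \<le> n" and nt: "n * t \<le> 1"
    using theta_pos[OF N] nhat_theta_le_1[OF N] N by (auto simp: t_def a_def n_def)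
  have rec: "t\<^sup>2 = (1 - t) * a\<^sup>2" using theta_Suc_sq[OF N] by (simp add: t_def a_def)
  \<comment> \<open>since t \<le> 1/n, the recursion gives t^2 = (1 - t) a^2 \<ge> ((1 - 1/n) a)^2\<close>
  have "((1 - 1 / n) * a)\<^sup>2 \<le> t\<^sup>2"
  proof -
    have "0 \<le> 1 - 1 / n" "1 - 1 / n \<le> 1 - t" using n1 nt by (auto simp: field_simps)
    then have "(1 - 1 / n) * (1 - 1 / n) \<le> 1 * (1 - t)"
      by (intro mult_mono) (use n1 in auto)
    then have "(1 - 1 / n)\<^sup>2 \<le> 1 - t" by (simp add: power2_eq_square)
    then show ?thesis unfolding rec power_mult_distrib by (simp add: mult_right_mono)
  qed
  then have ta: "(1 - 1 / n) * a \<le> t" by (rule power2_le_imp_le) (use t0 in simp)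
  have "(n - 1) * t * a = n * t * ((1 - 1 / n) * a)" using n1 by (simp add: field_simps)
  also have "\<dots> \<le> n * t * t" using ta t0 n1 by (intro mult_left_mono) auto
  also have "\<dots> = n * t\<^sup>2" by (simp add: power2_eq_square)
  also have "\<dots> = (1 - t) * (n * a) * a" unfolding rec by (simp add: power2_eq_square)
  finally have "(n - 1) * t \<le> (1 - t) * (n * a)" using a0 by simp
  then show ?thesis using Suc by (simp add: z_weight_def t_def a_def n_def)
qed

section \<open>Convex analysis on the real line and in Euclidean space\<close>

lemma graph_not_in_rel_interior_epigraph:
  fixes f :: "'a::euclidean_space \<Rightarrow> real"
  shows "(x, f x) \<notin> rel_interior (epigraph UNIV f)"
proof
  define S where "S = epigraph UNIV f"
  assume "(x, f x) \<in> rel_interior (epigraph UNIV f)"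
  then obtain e where e0: "e > 0" and sub: "cball (x, f x) e \<inter> affine hull S \<subseteq> S"
    by (auto simp: mem_rel_interior_cball S_def)
  have q1: "(x, f x + e) \<in> affine hull S" and q2: "(x, f x) \<in> affine hull S"
    by (auto intro!: hull_inc simp: S_def mem_epigraph e0 less_imp_le)
  have "(2::real) *\<^sub>R (x, f x) + (-1::real) *\<^sub>R (x, f x + e) \<in> affine hull S"
  proof -
    have aff: "\<And>p q u v. p \<in> affine hull S \<Longrightarrow> q \<in> affine hull S \<Longrightarrow> u + v = 1 \<Longrightarrow> u *\<^sub>R p + v *\<^sub>R q \<in> affine hull S"
      using affine_affine_hull[of S] unfolding affine_def by blast
    show ?thesis by (rule aff[OF q2 q1]) simp
  qed
  moreover have "(2::real) *\<^sub>R (x, f x) + (-1::real) *\<^sub>R (x, f x + e) = (x, f x - e)"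
    by (simp add: algebra_simps scaleR_2)
  moreover have "(x, f x - e) \<in> cball (x, f x) e"
    using e0 by (simp add: dist_Pair_Pair dist_real_def)
  ultimately have "(x, f x - e) \<in> S" using sub by auto
  then show False using e0 by (simp add: S_def mem_epigraph)
qed

lemma convex_on_has_subgradient:
  fixes f :: "'a::euclidean_space \<Rightarrow> real"
  assumes "convex_on UNIV f"
  shows "\<exists>sg. \<forall>y. f x + sg \<bullet> (y - x) \<le> f y"
proof -
  obtain a where a0: "a \<noteq> 0" and sup: "\<And>y. y \<in> epigraph UNIV f \<Longrightarrow> a \<bullet> (x, f x) \<le> a \<bullet> y"
    using supporting_hyperplane_rel_boundary[OF convex_epigraphI[OF assms] _ graph_not_in_rel_interior_epigraph]
    by (metis UNIV_I mem_epigraph order_refl)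
  obtain a1 a2 where aa: "a = (a1, a2)" by (cases a)
  have ineq: "a1 \<bullet> x + a2 * f x \<le> a1 \<bullet> y + a2 * r" if "f y \<le> r" for y r
    using sup[of "(y, r)"] that by (simp add: mem_epigraph aa)
  \<comment> \<open>the supporting hyperplane is not vertical\<close>
  have a2pos: "a2 > 0"
  proof (rule ccontr)
    assume "\<not> a2 > 0"
    moreover have "a2 \<ge> 0" using ineq[of x "f x + 1"] by (simp add: algebra_simps)
    ultimately have a20: "a2 = 0" by simp
    then have "a1 \<bullet> x \<le> a1 \<bullet> (x - a1)" using ineq[of "x - a1" "f (x - a1)"] by simp
    then have "a1 \<bullet> a1 \<le> 0" by (simp add: inner_diff_right)
    then have "a1 = 0" using inner_gt_zero_iff[of a1] by linarith
    then show False using a0 aa a20 by (simp add: zero_prod_def)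
  qed
  show ?thesis
  proof (intro exI allI)
    fix y
    have "a2 * (f x - (1 / a2) * (a1 \<bullet> (y - x))) \<le> a2 * f y"
      using ineq[of y "f y"] a2pos by (simp add: algebra_simps inner_diff_right)
    then show "f x + (- (1 / a2) *\<^sub>R a1) \<bullet> (y - x) \<le> f y" using a2pos by simp
  qed
qed

lemma bounded_subgradients_lipschitz:
  fixes g :: "'a::euclidean_space \<Rightarrow> real"
  assumes cv: "convex_on UNIV g"
    and bd: "\<forall>x sg. (\<forall>y. g x + sg \<bullet> (y - x) \<le> g y) \<longrightarrow> norm sg \<le> Lb"
  shows "\<bar>g x - g y\<bar> \<le> Lb * norm (x - y)" "0 \<le> Lb"
proof -
  have half: "g a - g b \<le> Lb * norm (a - b)" for a b
  proof -
    obtain sa where sa: "\<forall>z. g a + sa \<bullet> (z - a) \<le> g z" using convex_on_has_subgradient[OF cv] by blast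
    have "- (sa \<bullet> (b - a)) \<le> norm sa * norm (b - a)"
      using norm_cauchy_schwarz[of "-sa" "b - a"] by simp
    also have "\<dots> \<le> Lb * norm (a - b)" using bd sa by (simp add: norm_minus_commute mult_right_mono)
    finally show ?thesis using sa[rule_format, of b] by simp
  qed
  show "\<bar>g x - g y\<bar> \<le> Lb * norm (x - y)" using half[of x y] half[of y x] by (simp add: norm_minus_commute)
  obtain sx where "\<forall>z. g x + sx \<bullet> (z - x) \<le> g z" using convex_on_has_subgradient[OF cv] by blast
  then show "0 \<le> Lb" using bd norm_ge_zero order_trans by blast
qed

lemma coercive_continuous_has_min:
  fixes F :: "'a::euclidean_space \<Rightarrow> real"
  assumes cont: "continuous_on UNIV F" and co: "\<And>x. R < norm x \<Longrightarrow> F 0 < F x"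
  shows "\<exists>x. \<forall>y. F x \<le> F y"
proof -
  have "continuous_on (cball 0 (max R 0)) F" using cont by (rule continuous_on_subset) simp
  then obtain x where x: "\<forall>y\<in>cball 0 (max R 0). F x \<le> F y"
    using continuous_attains_inf[of "cball 0 (max R 0)" F] by auto
  have "F x \<le> F y" for y
  proof (cases "norm y \<le> max R 0")
    case False
    then have "F 0 < F y" by (intro co) auto
    moreover have "F x \<le> F 0" using x by simp
    ultimately show ?thesis by simp
  qed (use x in simp)
  then show ?thesis by blast
qed

lemma convex_plus_quadratic_has_min:
  fixes \<phi> :: "real \<Rightarrow> real"
  assumes cvx: "convex_on UNIV \<phi>" and lip: "M-lipschitz_on UNIV \<phi>" and lam: "0 < lam"
  shows "\<exists>a. \<forall>y. \<phi> a + lam / 2 * a\<^sup>2 - c * a \<le> \<phi> y + lam / 2 * y\<^sup>2 - c * y"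
proof -
  define \<psi> where "\<psi> y = \<phi> y + lam / 2 * y\<^sup>2 - c * y" for y
  have "continuous_on UNIV \<phi>" using convex_on_continuous[OF open_UNIV cvx] .
  then have cpsi: "continuous_on UNIV \<psi>" unfolding \<psi>_def by (intro continuous_intros)
  have M0: "0 \<le> M" using lip unfolding lipschitz_on_def by blast
  have low: "\<phi> 0 - M * \<bar>y\<bar> \<le> \<phi> y" for y
  proof -
    have "dist (\<phi> y) (\<phi> 0) \<le> M * dist y 0" using lip unfolding lipschitz_on_def by blast
    then show ?thesis by (simp add: dist_real_def)
  qed
  have co: "\<psi> 0 < \<psi> y" if "2 * (M + \<bar>c\<bar>) / lam < norm y" for y
  proof -
    have "2 * (M + \<bar>c\<bar>) < lam * \<bar>y\<bar>" using that lam by (simp add: field_simps)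
    then have "2 * (M + \<bar>c\<bar>) * \<bar>y\<bar> < lam * \<bar>y\<bar> * \<bar>y\<bar>"
      using M0 that by (intro mult_strict_right_mono) (auto intro: le_less_trans[rotated])
    then have "M * \<bar>y\<bar> + \<bar>c\<bar> * \<bar>y\<bar> < lam / 2 * y\<^sup>2"
      by (simp add: power2_eq_square abs_mult_self_eq algebra_simps)
    moreover have "c * y \<le> \<bar>c\<bar> * \<bar>y\<bar>" by (metis abs_ge_self abs_mult)
    ultimately show ?thesis using low[of y] unfolding \<psi>_def by simp
  qed
  show ?thesis using coercive_continuous_has_min[OF cpsi co] unfolding \<psi>_def by blast
qed

lemma subgradient_at_convex_plus_quadratic_min:
  fixes \<phi> :: "real \<Rightarrow> real"
  assumes cvx: "convex_on UNIV \<phi>"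
    and min: "\<forall>y. \<phi> a + lam / 2 * a\<^sup>2 - c * a \<le> \<phi> y + lam / 2 * y\<^sup>2 - c * y"
  shows "\<phi> a + (c - lam * a) * (y - a) \<le> \<phi> y"
proof (rule le_of_forall_scaled_slack)
  fix t :: real assume t0: "0 < t" and t1: "t \<le> 1"
  have "\<phi> ((1 - t) *\<^sub>R a + t *\<^sub>R y) \<le> (1 - t) * \<phi> a + t * \<phi> y"
    using cvx t0 t1 unfolding convex_on_def by simp
  moreover have "(1 - t) *\<^sub>R a + t *\<^sub>R y = a + t * (y - a)" by (simp add: algebra_simps)
  ultimately have "\<phi> a + lam / 2 * a\<^sup>2 - c * a
      \<le> (1 - t) * \<phi> a + t * \<phi> y + lam / 2 * (a + t * (y - a))\<^sup>2 - c * (a + t * (y - a))"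
    using min[rule_format, of "a + t * (y - a)"] by simp
  then have "t * (\<phi> a + (c - lam * a) * (y - a)) \<le> t * (\<phi> y + t * (lam / 2 * (y - a)\<^sup>2))"
    by (simp add: power2_eq_square algebra_simps)
  then show "\<phi> a + (c - lam * a) * (y - a) \<le> \<phi> y + t * (lam / 2 * (y - a)\<^sup>2)" using t0 by simp
qed

lemma prox_subgradient_exists:
  fixes \<phi> :: "real \<Rightarrow> real"
  assumes "convex_on UNIV \<phi>" "M-lipschitz_on UNIV \<phi>" "0 < lam"
  shows "\<exists>a. \<forall>y. \<phi> a + (c - lam * a) * (y - a) \<le> \<phi> y"
  using convex_plus_quadratic_has_min[OF assms] subgradient_at_convex_plus_quadratic_min[OF assms(1)] by blast

lemma conjugate_ge: "ereal (w * a - \<phi> a) \<le> conjugate \<phi> w"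
  unfolding conjugate_def by (rule SUP_upper2[of a]) auto

lemma conjugate_neq_MInf: "conjugate \<phi> w \<noteq> -\<infinity>"
  using conjugate_ge[of w 0 \<phi>] by auto

lemma conjugate_at_subgradient:
  assumes "\<forall>y. \<phi> a + s * (y - a) \<le> \<phi> y"
  shows "conjugate \<phi> s = ereal (s * a - \<phi> a)"
proof (rule antisym)
  show "conjugate \<phi> s \<le> ereal (s * a - \<phi> a)"
    unfolding conjugate_def
  proof (rule SUP_least)
    fix y
    show "ereal (s * y - \<phi> y) \<le> ereal (s * a - \<phi> a)"
      using assms[rule_format, of y] by (simp add: algebra_simps)
  qed
qed (rule conjugate_ge)

lemma conjugate_convex_comb:
  assumes "0 \<le> l" "l \<le> 1"
  shows "conjugate \<phi> (l * a + (1 - l) * b) \<le> ereal l * conjugate \<phi> a + ereal (1 - l) * conjugate \<phi> b"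
  unfolding conjugate_def[of \<phi> "l * a + (1 - l) * b"]
proof (rule SUP_least)
  fix y
  have "ereal (l * (a * y - \<phi> y)) \<le> ereal l * conjugate \<phi> a"
    using ereal_mult_left_mono[OF conjugate_ge[of a y \<phi>], of "ereal l"] assms by (simp add: mult.commute)
  moreover have "ereal ((1 - l) * (b * y - \<phi> y)) \<le> ereal (1 - l) * conjugate \<phi> b"
    using ereal_mult_left_mono[OF conjugate_ge[of b y \<phi>], of "ereal (1 - l)"] assms by (simp add: mult.commute)
  ultimately have "ereal (l * (a * y - \<phi> y)) + ereal ((1 - l) * (b * y - \<phi> y))
      \<le> ereal l * conjugate \<phi> a + ereal (1 - l) * conjugate \<phi> b"
    by (rule add_mono)
  then show "ereal ((l * a + (1 - l) * b) * y - \<phi> y) \<le> ereal l * conjugate \<phi> a + ereal (1 - l) * conjugate \<phi> b"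
    by (simp add: algebra_simps)
qed

lemma affine_imp_convex_on:
  assumes "\<And>x y u. F (u *\<^sub>R x + (1 - u) *\<^sub>R y) = u * F x + (1 - u) * F y"
  shows "convex_on UNIV F"
  unfolding convex_on_def
proof (intro conjI ballI allI impI)
  show "convex (UNIV :: 'a set)" by simp
  fix x y :: 'a and u v :: real
  assume "0 \<le> u" "0 \<le> v" "u + v = 1"
  then have "v = 1 - u" by simp
  then show "F (u *\<^sub>R x + v *\<^sub>R y) \<le> u * F x + v * F y" using assms by simp
qed

lemma convex_on_sum_fun:
  assumes "finite I" "\<And>i. i \<in> I \<Longrightarrow> convex_on UNIV (F i)"
  shows "convex_on UNIV (\<lambda>x. \<Sum>i\<in>I. F i x)"
  using assms
proof (induction I rule: finite_induct)
  case empty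
  then show ?case by (simp add: convex_on_const)
next
  case (insert a I)
  then show ?case by (simp add: convex_on_add)
qed

lemma strongly_convex_add:
  assumes "strongly_convex c F" "convex_on UNIV G"
  shows "strongly_convex c (\<lambda>x. F x + G x)"
  unfolding strongly_convex_def
proof (intro allI impI)
  fix x y :: 'a and s :: real
  assume s: "0 \<le> s \<and> s \<le> 1"
  have "F ((1 - s) *\<^sub>R x + s *\<^sub>R y) \<le> (1 - s) * F x + s * F y - c / 2 * s * (1 - s) * (norm (x - y))\<^sup>2"
    using assms(1) s unfolding strongly_convex_def by blast
  moreover have "G ((1 - s) *\<^sub>R x + s *\<^sub>R y) \<le> (1 - s) * G x + s * G y"
    using assms(2) s unfolding convex_on_def by auto
  ultimately show "F ((1 - s) *\<^sub>R x + s *\<^sub>R y) + G ((1 - s) *\<^sub>R x + s *\<^sub>R y)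
      \<le> (1 - s) * (F x + G x) + s * (F y + G y) - c / 2 * s * (1 - s) * (norm (x - y))\<^sup>2"
    by (simp add: algebra_simps)
qed

lemma strongly_convex_imp_convex:
  assumes "0 \<le> c" "strongly_convex c F"
  shows "convex_on UNIV F"
  unfolding convex_on_def
proof (intro conjI ballI allI impI)
  show "convex (UNIV :: 'a set)" by simp
  fix x y :: 'a and u v :: real
  assume uv: "0 \<le> u" "0 \<le> v" "u + v = 1"
  then have u: "u = 1 - v" by simp
  have "F ((1 - v) *\<^sub>R x + v *\<^sub>R y) \<le> (1 - v) * F x + v * F y - c / 2 * v * (1 - v) * (norm (x - y))\<^sup>2"
    using assms(2) uv unfolding strongly_convex_def by simp
  moreover have "0 \<le> c / 2 * v * (1 - v) * (norm (x - y))\<^sup>2" using uv assms(1) by simp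
  ultimately show "F (u *\<^sub>R x + v *\<^sub>R y) \<le> u * F x + v * F y" using u by simp
qed

lemma strongly_convex_min_growth:
  assumes sc: "strongly_convex c F" and c0: "0 \<le> c" and mn: "\<forall>y. F x0 \<le> F y"
  shows "F x0 + c / 2 * (norm (y - x0))\<^sup>2 \<le> F y"
proof -
  define r where "r = (norm (y - x0))\<^sup>2"
  have "F x0 + c / 2 * r \<le> F y + s * (c / 2 * r)" if s0: "0 < s" and s1: "s \<le> 1" for s
  proof -
    have "F x0 \<le> F ((1 - s) *\<^sub>R x0 + s *\<^sub>R y)" using mn by blast
    also have "\<dots> \<le> (1 - s) * F x0 + s * F y - c / 2 * s * (1 - s) * (norm (x0 - y))\<^sup>2"
      using sc s0 s1 unfolding strongly_convex_def by simp
    finally have "s * F x0 \<le> s * F y - s * (c / 2 * (1 - s) * r)"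
      by (simp add: r_def norm_minus_commute algebra_simps)
    moreover have "s * (F y + s * (c / 2 * r)) - s * (F x0 + c / 2 * r) = (s * F y - s * (c / 2 * (1 - s) * r)) - s * F x0"
      by (simp add: field_simps)
    ultimately have "s * (F x0 + c / 2 * r) \<le> s * (F y + s * (c / 2 * r))"
      by linarith
    then show ?thesis using s0 by simp
  qed
  then have "F x0 + c / 2 * r \<le> F y" by (rule le_of_forall_scaled_slack)
  then show ?thesis by (simp add: r_def)
qed

lemma strongly_convex_has_min:
  fixes F :: "'a::euclidean_space \<Rightarrow> real"
  assumes sc: "strongly_convex c F" and c0: "0 < c"
  shows "\<exists>x. \<forall>y. F x \<le> F y"
proof -
  have cv: "convex_on UNIV F" using strongly_convex_imp_convex[OF _ sc] c0 by simp
  have cont: "continuous_on UNIV F" using convex_on_continuous[OF open_UNIV cv] .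
  obtain sg where sg: "\<forall>y. F 0 + sg \<bullet> (y - 0) \<le> F y" using convex_on_has_subgradient[OF cv] by blast
  have low: "F 0 + sg \<bullet> x + c / 4 * (norm x)\<^sup>2 \<le> F x" for x
  proof -
    have "F ((1 - 1/2) *\<^sub>R 0 + (1/2) *\<^sub>R x) \<le> (1 - 1/2) * F 0 + (1/2) * F x - c / 2 * (1/2) * (1 - 1/2) * (norm (0 - x))\<^sup>2"
      using sc unfolding strongly_convex_def by (metis (no_types, lifting) field_sum_of_halves le_add_same_cancel2 less_eq_real_def zero_less_divide_1_iff zero_less_numeral)
    moreover have "F 0 + sg \<bullet> ((1/2) *\<^sub>R x) \<le> F ((1/2) *\<^sub>R x)" using sg[rule_format, of "(1/2) *\<^sub>R x"] by simp
    ultimately show ?thesis by (simp add: algebra_simps)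
  qed
  define R where "R = 4 * norm sg / c"
  have co: "F 0 < F x" if "R < norm x" for x
  proof -
    have R0: "0 \<le> R" using c0 by (simp add: R_def)
    have "4 * norm sg < c * norm x" using that c0 by (simp add: R_def field_simps)
    then have "4 * norm sg * norm x < c * norm x * norm x"
      using R0 that by (intro mult_strict_right_mono) auto
    then have "norm sg * norm x < c / 4 * (norm x)\<^sup>2" by (simp add: power2_eq_square)
    moreover have "- (norm sg * norm x) \<le> sg \<bullet> x" using norm_cauchy_schwarz[of "-sg" x] by simp
    ultimately show ?thesis using low[of x] by linarith
  qed
  show ?thesis by (rule coercive_continuous_has_min[OF cont co])
qed

section \<open>The dual function\<close>

definition coupling :: "'t::finite prob \<Rightarrow> nat \<Rightarrow> real^'t \<Rightarrow> real" where
  "coupling P i x = (if i < nn P then (Acol P i \<bullet> x) / real (nn P)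
     else if i < nn P + pp P then Brow P (i - nn P) \<bullet> x + bv P (i - nn P)
     else gc P (i - nn P - pp P) x)"

definition coupling_lip :: "'t::finite prob \<Rightarrow> nat \<Rightarrow> real" where
  "coupling_lip P i = (if i < nn P then norm (Acol P i) / real (nn P)
     else if i < nn P + pp P then norm (Brow P (i - nn P))
     else Lg P (i - nn P - pp P))"

lemma Lagr_eq_coupling: "Lagr P x u = fobj P x + (\<Sum>i<nhat P. u i * coupling P i x)"
  unfolding Lagr_def nhat_def sum_lessThan_add3 by (simp add: coupling_def)

lemma gradd_eq_coupling: "gradd P u i = - coupling P i (xstar P u)"
  by (simp add: gradd_def coupling_def Let_def)

lemma Lc_nonneg: "0 \<le> Lc P i" if "0 < mu P"
  using that by (simp add: Lc_def)

locale ardca_problem =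
  fixes P :: "'t::finite prob" and M :: real
  assumes n_pos: "1 \<le> nn P" and mu_pos: "0 < mu P"
    and f_sc: "strongly_convex (mu P) (fobj P)"
    and phi_cvx: "\<forall>i < nn P. convex_on UNIV (phi P i) \<and> M-lipschitz_on UNIV (phi P i)"
    and g_cvx: "\<forall>i < mm P. convex_on UNIV (gc P i) \<and>
        (\<forall>x sg. (\<forall>y. gc P i x + sg \<bullet> (y - x) \<le> gc P i y) \<longrightarrow> norm sg \<le> Lg P i)"
    and slater: "\<exists>x. (\<forall>j < pp P. Brow P j \<bullet> x + bv P j = 0) \<and> (\<forall>i < mm P. gc P i x < 0)"
begin

lemma nhat_ge_1: "1 \<le> nhat P" using n_pos by (simp add: nhat_def)

lemma Lc_ge_0: "0 \<le> Lc P i" using Lc_nonneg mu_pos by blast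

lemma fobj_convex: "convex_on UNIV (fobj P)"
  using strongly_convex_imp_convex[OF _ f_sc] mu_pos by simp

lemma gc_lipschitz:
  assumes "i < mm P"
  shows "\<bar>gc P i x - gc P i y\<bar> \<le> Lg P i * norm (x - y)" "0 \<le> Lg P i"
  using bounded_subgradients_lipschitz[of "gc P i" "Lg P i"] g_cvx assms by auto

lemma coupling_lipschitz:
  assumes "i < nhat P"
  shows "\<bar>coupling P i x - coupling P i y\<bar> \<le> coupling_lip P i * norm (x - y)"
proof -
  consider (a) "i < nn P" | (b) "nn P \<le> i" "i < nn P + pp P" | (c) "nn P + pp P \<le> i" by linarith
  then show ?thesis
  proof cases
    case a
    have "\<bar>Acol P i \<bullet> (x - y)\<bar> \<le> norm (Acol P i) * norm (x - y)" by (rule Cauchy_Schwarz_ineq2)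
    then have "\<bar>Acol P i \<bullet> x - Acol P i \<bullet> y\<bar> / real (nn P) \<le> norm (Acol P i) * norm (x - y) / real (nn P)"
      by (simp add: inner_diff_right divide_right_mono)
    then show ?thesis using a n_pos by (simp add: coupling_def coupling_lip_def diff_divide_distrib[symmetric])
  next
    case b
    have "\<bar>Brow P (i - nn P) \<bullet> (x - y)\<bar> \<le> norm (Brow P (i - nn P)) * norm (x - y)" by (rule Cauchy_Schwarz_ineq2)
    then show ?thesis using b by (simp add: coupling_def coupling_lip_def inner_diff_right)
  next
    case c
    have "i - nn P - pp P < mm P" using c assms by (simp add: nhat_def)
    then show ?thesis using c gc_lipschitz(1)[of "i - nn P - pp P" x y] by (simp add: coupling_def coupling_lip_def)
  qed
qed

lemma Lc_eq_coupling_lip: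
  assumes "i < nhat P"
  shows "Lc P i = (coupling_lip P i)\<^sup>2 / mu P"
  by (simp add: Lc_def coupling_lip_def power_divide)

lemma coupling_comb_convex:
  assumes dom: "in_dom P v"
  shows "convex_on UNIV (\<lambda>x. \<Sum>i<nhat P. v i * coupling P i x)"
proof (rule convex_on_sum_fun)
  fix i assume "i \<in> {..<nhat P}"
  then have i: "i < nhat P" by simp
  consider (a) "i < nn P" | (b) "nn P \<le> i" "i < nn P + pp P" | (c) "nn P + pp P \<le> i" by linarith
  then show "convex_on UNIV (\<lambda>x. v i * coupling P i x)"
  proof cases
    case a
    define cc where "cc = v i / real (nn P)"
    have e: "(\<lambda>x. v i * coupling P i x) = (\<lambda>x. cc * (Acol P i \<bullet> x))" using a by (auto simp: coupling_def cc_def)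
    show ?thesis
      unfolding e by (rule affine_imp_convex_on) (simp add: inner_add_right algebra_simps)
  next
    case b
    define bb where "bb = Brow P (i - nn P)"
    define b0 where "b0 = bv P (i - nn P)"
    have e: "(\<lambda>x. v i * coupling P i x) = (\<lambda>x. v i * (bb \<bullet> x + b0))" using b by (auto simp: coupling_def bb_def b0_def)
    show ?thesis
      unfolding e by (rule affine_imp_convex_on) (simp add: inner_add_right algebra_simps)
  next
    case c
    have v0: "0 \<le> v i" using dom c i by (simp add: in_dom_def)
    have "i - nn P - pp P < mm P" using c i by (simp add: nhat_def)
    then have "convex_on UNIV (gc P (i - nn P - pp P))" using g_cvx by blast
    then have "convex_on UNIV (\<lambda>x. v i * gc P (i - nn P - pp P) x)" using v0 by (rule convex_on_cmul[rotated])
    then show ?thesis using c by (simp add: coupling_def)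
  qed
qed simp

lemma Lagr_strongly_convex:
  assumes "in_dom P v"
  shows "strongly_convex (mu P) (\<lambda>x. Lagr P x v)"
  unfolding Lagr_eq_coupling by (rule strongly_convex_add[OF f_sc coupling_comb_convex[OF assms]])

lemma xstar_minimal:
  assumes "in_dom P v"
  shows "Lagr P (xstar P v) v \<le> Lagr P y v"
proof -
  have "\<exists>x. \<forall>y. Lagr P x v \<le> Lagr P y v" by (rule strongly_convex_has_min[OF Lagr_strongly_convex[OF assms] mu_pos])
  then have "\<forall>y. Lagr P (xstar P v) v \<le> Lagr P y v" unfolding xstar_def by (rule someI_ex)
  then show ?thesis by blast
qed

lemma xstar_growth:
  assumes "in_dom P v"
  shows "Lagr P (xstar P v) v + mu P / 2 * (norm (y - xstar P v))\<^sup>2 \<le> Lagr P y v"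
  using strongly_convex_min_growth[OF Lagr_strongly_convex[OF assms], of "xstar P v" y] mu_pos xstar_minimal[OF assms] by auto

lemma dfun_linearisation:
  "dfun P v + (\<Sum>i<nhat P. gradd P v i * (w i - v i)) = - Lagr P (xstar P v) w"
proof -
  have "(\<Sum>i<nhat P. w i * coupling P i (xstar P v)) = (\<Sum>i<nhat P. v i * coupling P i (xstar P v)) + (\<Sum>i<nhat P. coupling P i (xstar P v) * (w i - v i))"
    by (simp add: sum.distrib[symmetric] algebra_simps)
  then show ?thesis
    by (simp add: dfun_def Lagr_eq_coupling gradd_eq_coupling sum_negf)
qed

lemma neg_Lagr_le_dfun:
  assumes "in_dom P w"
  shows "- Lagr P x w \<le> dfun P w"
  using xstar_minimal[OF assms, of x] by (simp add: dfun_def)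

lemma dfun_convex_ineq:
  assumes "in_dom P w"
  shows "dfun P v + (\<Sum>i<nhat P. gradd P v i * (w i - v i)) \<le> dfun P w"
  unfolding dfun_linearisation by (rule neg_Lagr_le_dfun[OF assms])

lemma dfun_coordinate_smooth:
  assumes dom: "in_dom P v" and i: "i < nhat P"
  shows "dfun P (v(i := v i + t)) \<le> dfun P v + gradd P v i * t + Lc P i / 2 * t\<^sup>2"
proof -
  define w where "w = v(i := v i + t)"
  define x0 where "x0 = xstar P v"
  define x1 where "x1 = xstar P w"
  define r where "r = norm (x1 - x0)"
  have Lw: "Lagr P x1 w = Lagr P x1 v + t * coupling P i x1"
    unfolding Lagr_eq_coupling w_def
    using sum_fun_upd[of i "{..<nhat P}" "\<lambda>j y. y * coupling P j x1" v "v i + t"] i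
    by (simp add: algebra_simps)
  have sc: "Lagr P x0 v + mu P / 2 * r\<^sup>2 \<le> Lagr P x1 v"
    using xstar_growth[OF dom, of x1] by (simp add: x0_def r_def)
  have "- (t * (coupling P i x1 - coupling P i x0)) \<le> \<bar>t\<bar> * \<bar>coupling P i x1 - coupling P i x0\<bar>"
    by (metis abs_ge_minus_self abs_mult)
  also have "\<dots> \<le> \<bar>t\<bar> * (coupling_lip P i * r)"
    using coupling_lipschitz[OF i, of x1 x0] unfolding r_def by (rule mult_left_mono) simp
  also have "\<dots> \<le> (coupling_lip P i)\<^sup>2 / (2 * mu P) * t\<^sup>2 + mu P / 2 * r\<^sup>2"
    using mult_le_young[OF mu_pos, of "\<bar>t\<bar> * coupling_lip P i" r] by (simp add: power_mult_distrib mult_ac)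
  finally have key: "- (t * (coupling P i x1 - coupling P i x0))
      \<le> (coupling_lip P i)\<^sup>2 / (2 * mu P) * t\<^sup>2 + mu P / 2 * r\<^sup>2" .
  have "dfun P w = - Lagr P x1 v - t * coupling P i x1" unfolding dfun_def x1_def[symmetric] Lw by simp
  also have "\<dots> \<le> - Lagr P x0 v - mu P / 2 * r\<^sup>2 - t * coupling P i x1" using sc by simp
  also have "\<dots> = dfun P v + gradd P v i * t - mu P / 2 * r\<^sup>2 - t * (coupling P i x1 - coupling P i x0)"
    by (simp add: dfun_def gradd_eq_coupling x0_def algebra_simps)
  also have "\<dots> \<le> dfun P v + gradd P v i * t + (coupling_lip P i)\<^sup>2 / (2 * mu P) * t\<^sup>2" using key by simp
  also have "(coupling_lip P i)\<^sup>2 / (2 * mu P) = Lc P i / 2" by (simp add: Lc_eq_coupling_lip[OF i])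
  finally show ?thesis by (simp only: w_def)
qed

end



section \<open>The coordinate-wise proximal step\<close>

definition hreal :: "'t::finite prob \<Rightarrow> nat \<Rightarrow> real \<Rightarrow> real" where
  "hreal P j w = real_of_ereal (hfun P j w)"

definition prox_obj :: "'t::finite prob \<Rightarrow> nat \<Rightarrow> (nat \<Rightarrow> real) \<Rightarrow> (nat \<Rightarrow> real) \<Rightarrow> nat \<Rightarrow> real \<Rightarrow> ereal" where
  "prox_obj P k v z j w = ereal (real (nhat P) * theta P k * Lc P j * (w - z j)\<^sup>2 + gradd P v j * (w - z j)) + hfun P j w"

definition prox_subgrad :: "'t::finite prob \<Rightarrow> nat \<Rightarrow> (nat \<Rightarrow> real) \<Rightarrow> (nat \<Rightarrow> real) \<Rightarrow> nat \<Rightarrow> real" where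
  "prox_subgrad P k v z j = - 2 * (real (nhat P) * theta P k * Lc P j) * (ztil P k v z j - z j) - gradd P v j"

lemma ztil_eq_prox_obj: "j < nhat P \<Longrightarrow> ztil P k v z j = (SOME w. \<forall>w'. prox_obj P k v z j w \<le> prox_obj P k v z j w')"
  by (simp add: ztil_def prox_obj_def)

lemma ztil_minimal:
  assumes "j < nhat P" "\<exists>w0. \<forall>w'. prox_obj P k v z j w0 \<le> prox_obj P k v z j w'"
  shows "prox_obj P k v z j (ztil P k v z j) \<le> prox_obj P k v z j w'"
proof -
  have "\<forall>w'. prox_obj P k v z j (SOME w. \<forall>w'. prox_obj P k v z j w \<le> prox_obj P k v z j w') \<le> prox_obj P k v z j w'"
    using assms(2) by (rule someI_ex)
  then show ?thesis using ztil_eq_prox_obj[OF assms(1)] by simp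
qed

lemma ereal_divide_pos:
  fixes x :: ereal
  assumes "x \<noteq> -\<infinity>" "0 < n"
  shows "x / ereal n = (if x = \<infinity> then \<infinity> else ereal (real_of_ereal x / n))"
  using assms by (cases x) auto

lemma hfun_conj: "j < nn P \<Longrightarrow> hfun P j w = conjugate (phi P j) w / ereal (real (nn P))"
  by (simp add: hfun_def)

lemma hfun_eq_block: "nn P \<le> j \<Longrightarrow> j < nn P + pp P \<Longrightarrow> hfun P j w = 0"
  by (simp add: hfun_def)

lemma hfun_ineq_block: "nn P + pp P \<le> j \<Longrightarrow> hfun P j w = (if 0 \<le> w then 0 else \<infinity>)"
  by (simp add: hfun_def)

context ardca_problem
begin

lemma hfun_conj_real:
  assumes "j < nn P"
  shows "hfun P j w = (if conjugate (phi P j) w = \<infinity> then \<infinity> else ereal (real_of_ereal (conjugate (phi P j) w) / real (nn P)))"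
  using hfun_conj[OF assms] ereal_divide_pos[OF conjugate_neq_MInf, of "real (nn P)" "phi P j" w] n_pos by simp

lemma hfun_neq_MInf: "hfun P j w \<noteq> -\<infinity>"
proof -
  consider (a) "j < nn P" | (b) "nn P \<le> j" "j < nn P + pp P" | (c) "nn P + pp P \<le> j" by linarith
  then show ?thesis
    by cases (simp_all add: hfun_conj_real hfun_eq_block hfun_ineq_block)
qed

lemma hfun_finite: "hfun P j w < \<infinity> \<Longrightarrow> hfun P j w = ereal (hreal P j w)"
  using hfun_neq_MInf[of j w] by (cases "hfun P j w") (auto simp: hreal_def)

lemma hreal_ge: "ereal x \<le> hfun P j w \<Longrightarrow> hfun P j w < \<infinity> \<Longrightarrow> x \<le> hreal P j w"
  using hfun_finite by fastforce

lemma hfun_convex_comb: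
  assumes fa: "hfun P j a < \<infinity>" and fb: "hfun P j b < \<infinity>" and l0: "0 \<le> l" and l1: "l \<le> 1"
  shows "hfun P j (l * a + (1 - l) * b) < \<infinity> \<and> hreal P j (l * a + (1 - l) * b) \<le> l * hreal P j a + (1 - l) * hreal P j b"
proof -
  consider (a) "j < nn P" | (b) "nn P \<le> j" "j < nn P + pp P" | (c) "nn P + pp P \<le> j" by linarith
  then show ?thesis
  proof cases
    case a
    define C where "C = conjugate (phi P j)"
    have Ca: "C a \<noteq> \<infinity>" using fa a by (simp add: hfun_conj_real C_def split: if_splits)
    have Cb: "C b \<noteq> \<infinity>" using fb a by (simp add: hfun_conj_real C_def split: if_splits)
    have Ca': "C a = ereal (real_of_ereal (C a))" using Ca conjugate_neq_MInf[of "phi P j" a] by (cases "C a") (auto simp: C_def)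
    have Cb': "C b = ereal (real_of_ereal (C b))" using Cb conjugate_neq_MInf[of "phi P j" b] by (cases "C b") (auto simp: C_def)
    have le: "C (l * a + (1 - l) * b) \<le> ereal l * C a + ereal (1 - l) * C b"
      unfolding C_def by (rule conjugate_convex_comb[OF l0 l1])
    also have "\<dots> = ereal (l * real_of_ereal (C a) + (1 - l) * real_of_ereal (C b))"
      by (subst Ca', subst Cb') simp
    finally have le2: "C (l * a + (1 - l) * b) \<le> ereal (l * real_of_ereal (C a) + (1 - l) * real_of_ereal (C b))" .
    then have fin: "C (l * a + (1 - l) * b) \<noteq> \<infinity>" by auto
    have rl: "real_of_ereal (C (l * a + (1 - l) * b)) \<le> l * real_of_ereal (C a) + (1 - l) * real_of_ereal (C b)"
      using le2 fin conjugate_neq_MInf[of "phi P j" "l * a + (1 - l) * b"]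
      by (cases "C (l * a + (1 - l) * b)") (auto simp: C_def)
    have np: "0 < real (nn P)" using n_pos by simp
    have "real_of_ereal (C (l * a + (1 - l) * b)) / real (nn P) \<le> (l * real_of_ereal (C a) + (1 - l) * real_of_ereal (C b)) / real (nn P)"
      using rl np by (simp add: divide_right_mono)
    then show ?thesis using a fin Ca Cb
      by (simp add: hfun_conj_real hreal_def C_def[symmetric] add_divide_distrib)
  next
    case b
    then show ?thesis by (simp add: hfun_eq_block hreal_def)
  next
    case c
    have "0 \<le> a" "0 \<le> b" using fa fb c by (simp_all add: hfun_ineq_block split: if_splits)
    then have "0 \<le> l * a + (1 - l) * b" using l0 l1 by simp
    then show ?thesis using c \<open>0 \<le> a\<close> \<open>0 \<le> b\<close> by (simp add: hfun_ineq_block hreal_def)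
  qed
qed

lemma hfun_merge_weighted:
  assumes fr: "hfun P j r < \<infinity>" and rr: "hreal P j r \<le> \<rho>" and a: "0 \<le> a" and b: "0 \<le> b"
    and fz: "b \<noteq> 0 \<Longrightarrow> hfun P j z < \<infinity>"
  shows "\<exists>r' \<rho>'. a * r + b * z = (a + b) * r' \<and> a * \<rho> + b * hreal P j z = (a + b) * \<rho>'
           \<and> hfun P j r' < \<infinity> \<and> hreal P j r' \<le> \<rho>'"
proof (cases "b = 0")
  case True
  then show ?thesis using fr rr by (intro exI[of _ r] exI[of _ \<rho>]) simp
next
  case False
  then have ab: "0 < a + b" using a b by simp
  define l where "l = a / (a + b)"
  have l0: "0 \<le> l" "l \<le> 1" using a b ab by (auto simp: l_def)
  have la: "(a + b) * l = a" and lb: "(a + b) * (1 - l) = b" using ab by (simp_all add: l_def field_simps)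
  have c: "hfun P j (l * r + (1 - l) * z) < \<infinity>
      \<and> hreal P j (l * r + (1 - l) * z) \<le> l * hreal P j r + (1 - l) * hreal P j z"
    by (rule hfun_convex_comb[OF fr fz[OF False] l0])
  have "l * hreal P j r \<le> l * \<rho>" using rr l0(1) by (rule mult_left_mono)
  moreover have "a * r + b * z = (a + b) * (l * r + (1 - l) * z)"
    "a * \<rho> + b * hreal P j z = (a + b) * (l * \<rho> + (1 - l) * hreal P j z)"
    unfolding distrib_left mult.assoc[symmetric] la lb by simp_all
  ultimately show ?thesis using c by (intro exI[of _ "l * r + (1 - l) * z"] exI[of _ "l * \<rho> + (1 - l) * hreal P j z"]) simp
qed

lemma theta_pos_nhat: "0 < theta P k" using theta_pos[OF nhat_ge_1] .

lemma prox_weight_nonneg: "0 \<le> real (nhat P) * theta P k * Lc P j"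
  using Lc_ge_0[of j] theta_pos_nhat[of k] by simp

lemma prox_weight_eq_0_iff: "real (nhat P) * theta P k * Lc P j = 0 \<longleftrightarrow> Lc P j = 0"
  using nhat_ge_1 theta_pos_nhat[of k] by simp

lemma ztil_eq_if_growth:
  assumes j: "j < nhat P" and c: "0 < c" and fin: "prox_obj P k v z j ws < \<infinity>"
    and growth: "\<And>w. prox_obj P k v z j ws + ereal (c * (w - ws)\<^sup>2) \<le> prox_obj P k v z j w"
  shows "ztil P k v z j = ws"
proof -
  define Q where "Q = prox_obj P k v z j"
  define zt where "zt = ztil P k v z j"
  have Qmin: "Q ws \<le> Q w" for w
  proof -
    have "Q ws \<le> Q ws + ereal (c * (w - ws)\<^sup>2)" using c by (intro add_increasing2) auto
    then show ?thesis using growth[of w] unfolding Q_def by order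
  qed
  have "Q zt \<le> Q ws" unfolding zt_def Q_def by (rule ztil_minimal[OF j]) (use Qmin Q_def in blast)
  with growth[of zt] have "Q ws + ereal (c * (zt - ws)\<^sup>2) \<le> Q ws"
    unfolding Q_def zt_def by (rule order_trans)
  moreover have "Q ws \<noteq> -\<infinity>" using hfun_neq_MInf by (simp add: Q_def prox_obj_def)
  then obtain q where "Q ws = ereal q" using fin by (cases "Q ws") (auto simp: Q_def)
  ultimately have "ereal q + ereal (c * (zt - ws)\<^sup>2) \<le> ereal q" by simp
  then have "c * (zt - ws)\<^sup>2 \<le> 0" by simp
  then show ?thesis using c by (simp add: zt_def mult_le_0_iff)
qed

lemma hfun_conj_ge:
  assumes "j < nn P"
  shows "ereal (y * w - phi P j (real (nn P) * y) / real (nn P)) \<le> hfun P j w"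
proof -
  have "ereal (w * (real (nn P) * y) - phi P j (real (nn P) * y)) / ereal (real (nn P))
      \<le> conjugate (phi P j) w / ereal (real (nn P))"
    using n_pos by (intro ereal_divide_right_mono conjugate_ge) auto
  then show ?thesis using n_pos assms by (simp add: hfun_conj diff_divide_distrib mult.commute)
qed

(* In the first block the prox step is a Moreau decomposition: prox_subgrad is attained in the
   conjugate, so the Fenchel-Young inequality for h_j is an equality at ztil. *)
lemma prox_fenchel_equality:
  fixes k :: nat and v z :: "nat \<Rightarrow> real"
  assumes j: "j < nn P"
  defines "zt \<equiv> ztil P k v z j" and "y \<equiv> prox_subgrad P k v z j"
  shows "hfun P j zt = ereal (y * zt - phi P j (real (nn P) * y) / real (nn P))"
proof -
  define c g n \<phi> where "c = real (nhat P) * theta P k * Lc P j" and "g = gradd P v j"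
    and "n = real (nn P)" and "\<phi> = phi P j"
  have jN: "j < nhat P" using j by (simp add: nhat_def)
  have n0: "0 < n" using n_pos by (simp add: n_def)
  have cvx: "convex_on UNIV \<phi>" and lip: "M-lipschitz_on UNIV \<phi>" using phi_cvx j by (auto simp: \<phi>_def)
  have hlow: "ereal (y' * w - \<phi> (n * y') / n) \<le> hfun P j w" for y' w
    using hfun_conj_ge[OF j] by (simp add: \<phi>_def n_def)
  have Q: "prox_obj P k v z j w = ereal (c * (w - z j)\<^sup>2 + g * (w - z j)) + hfun P j w" for w
    by (simp add: prox_obj_def c_def g_def)
  have yc: "y = - 2 * c * (zt - z j) - g" by (simp add: y_def prox_subgrad_def zt_def c_def g_def)
  show ?thesis
  proof (cases "c = 0")
    case False
    then have cp: "0 < c" using prox_weight_nonneg[of k j, folded c_def] by simp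
    have lam0: "0 < 1 / (2 * n * c)" using cp n0 by simp
    obtain a where a: "\<forall>t. \<phi> a + (z j - g / (2 * c) - 1 / (2 * n * c) * a) * (t - a) \<le> \<phi> t"
      using prox_subgradient_exists[OF cvx lip lam0, of "z j - g / (2 * c)"] by blast
    define ws where "ws = z j - g / (2 * c) - 1 / (2 * n * c) * a"
    have deriv0: "2 * c * (ws - z j) + g + a / n = 0"
      using cp n0 by (simp add: ws_def field_simps)
    define R where "R w = c * (w - z j)\<^sup>2 + g * (w - z j) + (w * a - \<phi> a) / n" for w
    have hws: "hfun P j ws = ereal ((ws * a - \<phi> a) / n)"
      using conjugate_at_subgradient[of \<phi> a ws] a n0
      by (simp add: hfun_conj[OF j] ws_def \<phi>_def n_def)
    have hlow_a: "ereal ((w * a - \<phi> a) / n) \<le> hfun P j w" for w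
    proof -
      have "ereal (w * a - \<phi> a) / ereal n \<le> conjugate \<phi> w / ereal n"
        using conjugate_ge[of w a \<phi>] n0 by (intro ereal_divide_right_mono) auto
      then show ?thesis using n0 by (simp add: hfun_conj[OF j] \<phi>_def n_def)
    qed
    have Rlow: "ereal (R w) \<le> prox_obj P k v z j w" for w
      using add_left_mono[OF hlow_a[of w], of "ereal (c * (w - z j)\<^sup>2 + g * (w - z j))"]
      by (simp add: Q R_def)
    have Rws: "prox_obj P k v z j ws = ereal (R ws)" by (simp add: Q hws R_def)
    have Rid: "R w = R ws + c * (w - ws)\<^sup>2" for w
    proof -
      have "R w - R ws - c * (w - ws)\<^sup>2 = (w - ws) * (2 * c * (ws - z j) + g + a / n)"
        using n0 by (simp add: R_def power2_eq_square field_simps)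
      then show ?thesis using deriv0 by simp
    qed
    have "prox_obj P k v z j ws + ereal (c * (w - ws)\<^sup>2) \<le> prox_obj P k v z j w" for w
      using Rws Rlow[of w] Rid[of w] by simp
    then have "zt = ws" unfolding zt_def by (intro ztil_eq_if_growth[OF jN cp]) (simp_all add: Rws)
    moreover have "y = a / n" using deriv0 yc \<open>zt = ws\<close> by simp
    ultimately show ?thesis using hws n0 by (simp add: \<phi>_def n_def field_simps)
  next
    case True
    then have "Lc P j = 0" using prox_weight_eq_0_iff[of k j] unfolding c_def by blast
    then have "Acol P j = 0" using j mu_pos n_pos by (simp add: Lc_def)
    then have g0: "g = 0" by (simp add: g_def gradd_eq_coupling coupling_def j)
    obtain s where "\<forall>t. \<phi> 0 + s * (t - 0) \<le> \<phi> t"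
      using convex_on_has_subgradient[OF cvx, of 0] by auto
    then have hs: "hfun P j s = ereal (- \<phi> 0 / n)"
      using conjugate_at_subgradient[of \<phi> 0 s] n_pos by (simp add: hfun_conj[OF j] \<phi>_def n_def)
    have Qh: "prox_obj P k v z j w = hfun P j w" for w by (simp add: Q True g0)
    have "\<forall>w. hfun P j s \<le> hfun P j w" using hs hlow[of 0] by simp
    then have "hfun P j zt \<le> hfun P j s" using ztil_minimal[OF jN, of k v z s] unfolding Qh zt_def by blast
    then have "hfun P j zt = ereal (- \<phi> 0 / n)" using hs hlow[of 0 zt] by simp
    then show ?thesis using True g0 yc by (simp add: \<phi>_def n_def)
  qed
qed

lemma prox_eq_block:
  assumes j1: "nn P \<le> j" and j2: "j < nn P + pp P"
  shows "prox_subgrad P k v z j = 0"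
proof -
  define c g where "c = real (nhat P) * theta P k * Lc P j" and "g = gradd P v j"
  have jN: "j < nhat P" using j2 by (simp add: nhat_def)
  have Q: "prox_obj P k v z j w = ereal (c * (w - z j)\<^sup>2 + g * (w - z j))" for w
    by (simp add: prox_obj_def c_def g_def hfun_eq_block[OF j1 j2])
  have y: "prox_subgrad P k v z j = - 2 * c * (ztil P k v z j - z j) - g"
    by (simp add: prox_subgrad_def c_def g_def)
  show ?thesis
  proof (cases "c = 0")
    case False
    then have cp: "0 < c" using prox_weight_nonneg[of k j, folded c_def] by simp
    define ws where "ws = z j - g / (2 * c)"
    have d0: "2 * c * (ws - z j) + g = 0" using cp by (simp add: ws_def field_simps)
    have "prox_obj P k v z j ws + ereal (c * (w - ws)\<^sup>2) \<le> prox_obj P k v z j w" for w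
    proof -
      have "c * (w - z j)\<^sup>2 + g * (w - z j) = c * (ws - z j)\<^sup>2 + g * (ws - z j) + c * (w - ws)\<^sup>2
          + (w - ws) * (2 * c * (ws - z j) + g)"
        by (simp add: power2_eq_square algebra_simps)
      then show ?thesis using d0 by (simp add: Q)
    qed
    then have "ztil P k v z j = ws" by (intro ztil_eq_if_growth[OF jN cp]) (simp_all add: Q)
    then show ?thesis using d0 y by simp
  next
    case True
    then have "Lc P j = 0" using prox_weight_eq_0_iff[of k j] unfolding c_def by blast
    then have B0: "Brow P (j - nn P) = 0" using j1 j2 mu_pos by (simp add: Lc_def)
    \<comment> \<open>a vanishing row of B forces b_j = 0, as the Slater point satisfies B x + b = 0\<close>
    obtain xs where "\<forall>i < pp P. Brow P i \<bullet> xs + bv P i = 0" using slater by blast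
    moreover have "j - nn P < pp P" using j1 j2 by simp
    ultimately have "Brow P (j - nn P) \<bullet> xs + bv P (j - nn P) = 0" by blast
    then have "bv P (j - nn P) = 0" using B0 by simp
    then have "g = 0" using B0 j1 j2 by (simp add: g_def gradd_eq_coupling coupling_def)
    then show ?thesis using True y by simp
  qed
qed

lemma prox_ineq_block:
  fixes k :: nat and v z :: "nat \<Rightarrow> real"
  assumes j1: "nn P + pp P \<le> j" and j2: "j < nhat P"
  defines "y \<equiv> prox_subgrad P k v z j" and "zt \<equiv> ztil P k v z j"
  shows "y \<le> 0 \<and> y * zt = 0 \<and> 0 \<le> zt"
proof -
  define c g where "c = real (nhat P) * theta P k * Lc P j" and "g = gradd P v j"
  define q where "q w = c * (w - z j)\<^sup>2 + g * (w - z j)" for w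
  have Q: "prox_obj P k v z j w = (if 0 \<le> w then ereal (q w) else \<infinity>)" for w
    by (simp add: prox_obj_def c_def g_def q_def hfun_ineq_block[OF j1])
  have yeq: "y = - 2 * c * (zt - z j) - g" by (simp add: y_def zt_def prox_subgrad_def c_def g_def)
  show ?thesis
  proof (cases "c = 0")
    case False
    then have cp: "0 < c" using prox_weight_nonneg[of k j, folded c_def] by simp
    define ws where "ws = max 0 (z j - g / (2 * c))"
    have d: "0 \<le> 2 * c * (ws - z j) + g" "ws * (2 * c * (ws - z j) + g) = 0"
      using cp by (auto simp: ws_def max_def field_simps)
    have qid: "q w = q ws + c * (w - ws)\<^sup>2 + (w - ws) * (2 * c * (ws - z j) + g)" for w
      by (simp add: q_def power2_eq_square algebra_simps)
    have "q ws + c * (w - ws)\<^sup>2 \<le> q w" if "0 \<le> w" for w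
    proof -
      have "(w - ws) * (2 * c * (ws - z j) + g) = w * (2 * c * (ws - z j) + g)"
        using d(2) by (simp add: left_diff_distrib)
      moreover have "0 \<le> w * (2 * c * (ws - z j) + g)" using d(1) that by simp
      ultimately show ?thesis using qid[of w] by linarith
    qed
    then have "zt = ws" unfolding zt_def
      by (intro ztil_eq_if_growth[OF j2 cp]) (auto simp: Q ws_def)
    then have y: "y = - (2 * c * (ws - z j) + g)" using yeq by simp
    with \<open>zt = ws\<close> have "y * zt = - (ws * (2 * c * (ws - z j) + g))" by (simp add: ring_distribs)
    then show ?thesis using d y \<open>zt = ws\<close> by (simp add: ws_def)
  next
    case True
    have jm: "j - nn P - pp P < mm P" using j1 j2 by (simp add: nhat_def)
    have "Lc P j = 0" using True prox_weight_eq_0_iff[of k j] unfolding c_def by blast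
    then have "Lg P (j - nn P - pp P) = 0" using j1 mu_pos by (simp add: Lc_def)
    \<comment> \<open>then g_j is constant, and negative by Slater's condition\<close>
    then have "gc P (j - nn P - pp P) (xstar P v) = gc P (j - nn P - pp P) xs" for xs
      using gc_lipschitz(1)[OF jm, of "xstar P v" xs] by simp
    moreover obtain xs where "gc P (j - nn P - pp P) xs < 0" using slater jm by blast
    ultimately have "gc P (j - nn P - pp P) (xstar P v) < 0" by metis
    then have gp: "0 < g" using j1 by (simp add: g_def gradd_eq_coupling coupling_def)
    have "prox_obj P k v z j 0 \<le> prox_obj P k v z j w" for w
      using gp by (auto simp: Q q_def True algebra_simps)
    then have "prox_obj P k v z j zt \<le> prox_obj P k v z j 0"
      unfolding zt_def by (intro ztil_minimal[OF j2]) blast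
    then have "0 \<le> zt \<and> g * zt \<le> 0" by (auto simp: Q q_def True algebra_simps split: if_splits)
    then have "zt = 0" using gp by (simp add: mult_le_0_iff)
    then show ?thesis using yeq True gp by simp
  qed
qed

lemma prox_properties:
  fixes k :: nat and v z :: "nat \<Rightarrow> real"
  assumes j: "j < nhat P"
  defines "zt \<equiv> ztil P k v z j" and "y \<equiv> prox_subgrad P k v z j"
  shows "hfun P j zt < \<infinity>"
    and "ereal (hreal P j zt + y * (w - zt)) \<le> hfun P j w"
    and "j < nn P \<Longrightarrow> hreal P j zt = y * zt - phi P j (real (nn P) * y) / real (nn P)"
    and "nn P \<le> j \<Longrightarrow> j < nn P + pp P \<Longrightarrow> y = 0 \<and> hreal P j zt = 0"
    and "nn P + pp P \<le> j \<Longrightarrow> y \<le> 0 \<and> y * zt = 0 \<and> hreal P j zt = 0 \<and> 0 \<le> zt"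
proof -
  consider (a) "j < nn P" | (b) "nn P \<le> j" "j < nn P + pp P" | (c) "nn P + pp P \<le> j" by linarith
  note cases = this
  show "nn P \<le> j \<Longrightarrow> j < nn P + pp P \<Longrightarrow> y = 0 \<and> hreal P j zt = 0"
    using prox_eq_block by (simp add: y_def hfun_eq_block hreal_def)
  show ineq: "nn P + pp P \<le> j \<Longrightarrow> y \<le> 0 \<and> y * zt = 0 \<and> hreal P j zt = 0 \<and> 0 \<le> zt"
    using prox_ineq_block[OF _ j] by (simp add: y_def zt_def hfun_ineq_block hreal_def)
  show conj: "j < nn P \<Longrightarrow> hreal P j zt = y * zt - phi P j (real (nn P) * y) / real (nn P)"
    using prox_fenchel_equality by (simp add: zt_def y_def hreal_def)
  show "hfun P j zt < \<infinity>"
    using cases prox_fenchel_equality ineq by cases (auto simp: zt_def y_def hfun_eq_block hfun_ineq_block)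
  show "ereal (hreal P j zt + y * (w - zt)) \<le> hfun P j w"
  proof (cases rule: cases)
    case a
    have "hreal P j zt + y * (w - zt) = y * w - phi P j (real (nn P) * y) / real (nn P)"
      using conj[OF a] by (simp add: algebra_simps)
    then show ?thesis using hfun_conj_ge[OF a, of y w] by simp
  next
    case b
    then show ?thesis using prox_eq_block by (simp add: y_def hfun_eq_block hreal_def)
  next
    case c
    then have y: "y \<le> 0 \<and> y * zt = 0 \<and> hreal P j zt = 0" using ineq by simp
    show ?thesis
    proof (cases "0 \<le> w")
      case True
      then have "y * w \<le> 0" using y by (simp add: mult_nonpos_nonneg)
      then have "hreal P j zt + y * (w - zt) \<le> 0" using y by (auto simp: right_diff_distrib)
      then show ?thesis using c True by (simp add: hfun_ineq_block)
    qed (simp add: hfun_ineq_block c)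
  qed
qed

end



section \<open>Iterates and averaging over the random index\<close>

lemma sum_PiE_fun_upd:
  fixes X :: "(nat \<Rightarrow> nat) \<Rightarrow> real"
  assumes kI: "k \<in> I" and fI: "finite I" and fB: "finite B"
  shows "(\<Sum>s\<in>PiE I (\<lambda>_. B). \<Sum>i\<in>B. X (s(k := i))) = real (card B) * (\<Sum>s\<in>PiE I (\<lambda>_. B). X s)"
proof -
  define J where "J = I - {k}"
  have IJ: "I = insert k J" and kJ: "k \<notin> J" using kI by (auto simp: J_def)
  have fJ: "finite J" using fI by (simp add: J_def)
  have eq: "PiE I (\<lambda>_. B) = (\<lambda>(y, g). g(k := y)) ` (B \<times> PiE J (\<lambda>_. B))"
    unfolding IJ by (rule PiE_insert_eq)
  have inj: "inj_on (\<lambda>(y, g). g(k := y)) (B \<times> PiE J (\<lambda>_. B))"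
    using inj_combinator[OF kJ, of "\<lambda>_. B"] by simp
  have re: "(\<Sum>s\<in>PiE I (\<lambda>_. B). F s) = (\<Sum>(y, g)\<in>B \<times> PiE J (\<lambda>_. B). F (g(k := y)))" for F :: "(nat \<Rightarrow> nat) \<Rightarrow> real"
    unfolding eq by (subst sum.reindex[OF inj]) (simp add: case_prod_unfold)
  have "(\<Sum>s\<in>PiE I (\<lambda>_. B). \<Sum>i\<in>B. X (s(k := i))) = (\<Sum>(y, g)\<in>B \<times> PiE J (\<lambda>_. B). \<Sum>i\<in>B. X (g(k := i)))"
    by (simp add: re)
  also have "\<dots> = (\<Sum>y\<in>B. \<Sum>g\<in>PiE J (\<lambda>_. B). \<Sum>i\<in>B. X (g(k := i)))"
    by (rule sum.cartesian_product[symmetric])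
  also have "\<dots> = real (card B) * (\<Sum>g\<in>PiE J (\<lambda>_. B). \<Sum>i\<in>B. X (g(k := i)))" by simp
  also have "(\<Sum>g\<in>PiE J (\<lambda>_. B). \<Sum>i\<in>B. X (g(k := i))) = (\<Sum>i\<in>B. \<Sum>g\<in>PiE J (\<lambda>_. B). X (g(k := i)))"
    by (rule sum.swap)
  also have "\<dots> = (\<Sum>(y, g)\<in>B \<times> PiE J (\<lambda>_. B). X (g(k := y)))"
    by (rule sum.cartesian_product)
  also have "\<dots> = (\<Sum>s\<in>PiE I (\<lambda>_. B). X s)" by (simp add: re)
  finally show ?thesis .
qed

lemma sum_seqs_average_upd:
  fixes X :: "(nat \<Rightarrow> nat) \<Rightarrow> real"
  assumes "k \<le> K" "1 \<le> nhat P"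
  shows "(\<Sum>s\<in>seqs P K. (1 / real (nhat P)) * (\<Sum>i<nhat P. X (s(k := i)))) = (\<Sum>s\<in>seqs P K. X s)"
proof -
  have "(\<Sum>s\<in>seqs P K. (1 / real (nhat P)) * (\<Sum>i<nhat P. X (s(k := i)))) = (1 / real (nhat P)) * (\<Sum>s\<in>seqs P K. \<Sum>i<nhat P. X (s(k := i)))"
    by (simp add: sum_distrib_left)
  also have "(\<Sum>s\<in>seqs P K. \<Sum>i<nhat P. X (s(k := i))) = real (nhat P) * (\<Sum>s\<in>seqs P K. X s)"
    unfolding seqs_def using sum_PiE_fun_upd[of k "{0..K}" "{..<nhat P}" X] assms by simp
  also have "(1 / real (nhat P)) * (real (nhat P) * (\<Sum>s\<in>seqs P K. X s)) = (\<Sum>s\<in>seqs P K. X s)"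
    using assms by simp
  finally show ?thesis .
qed

lemma card_seqs: "card (seqs P K) = nhat P ^ Suc K"
  by (simp add: seqs_def card_PiE)

lemma seqs_range: "s \<in> seqs P K \<Longrightarrow> k \<le> K \<Longrightarrow> s k < nhat P"
  by (auto simp: seqs_def PiE_def Pi_def)

lemma ardca_prefix:
  "(\<And>j. j < k \<Longrightarrow> s j = s' j) \<Longrightarrow> ardca P u0 s k = ardca P u0 s' k"
proof (induction k)
  case 0
  then show ?case by simp
next
  case (Suc k)
  then have "ardca P u0 s k = ardca P u0 s' k" by simp
  moreover have "s k = s' k" using Suc by simp
  ultimately show ?case by (simp add: Let_def)
qed

lemma z_it_prefix: "(\<And>j. j < k \<Longrightarrow> s j = s' j) \<Longrightarrow> z_it P u0 s k = z_it P u0 s' k"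
  using ardca_prefix[of k s s' P u0] by (simp add: z_it_def)

lemma u_it_prefix: "(\<And>j. j < k \<Longrightarrow> s j = s' j) \<Longrightarrow> u_it P u0 s k = u_it P u0 s' k"
  using ardca_prefix[of k s s' P u0] by (simp add: u_it_def)

lemma z_it_0: "z_it P u0 s 0 = u0" by (simp add: z_it_def)
lemma u_it_0: "u_it P u0 s 0 = u0" by (simp add: u_it_def)

lemma z_it_Suc: "z_it P u0 s (Suc k) = (z_it P u0 s k)(s k := zt_it P u0 s k (s k))"
  by (simp add: z_it_def zt_it_def v_it_def u_it_def Let_def split: prod.split)

lemma u_it_Suc: "u_it P u0 s (Suc k) = (\<lambda>i. v_it P u0 s k i + real (nhat P) * theta P k * (z_it P u0 s (Suc k) i - z_it P u0 s k i))"
  by (simp add: z_it_def zt_it_def v_it_def u_it_def Let_def split: prod.split)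

(* The surrogate hhat_k for h(u^k) (the paper's \hat h_k).  If some h_j(u0_j) = \<infinity>, its junk
   value hreal = 0 is harmless only for nhat = 1, where 1/theta_{-1}^2 = 0 and 1 - theta_0 = 0. *)
fun hhat :: "'t::finite prob \<Rightarrow> (nat \<Rightarrow> real) \<Rightarrow> (nat \<Rightarrow> nat) \<Rightarrow> nat \<Rightarrow> nat \<Rightarrow> real" where
  "hhat P u0 s 0 j = hreal P j (u0 j)"
| "hhat P u0 s (Suc k) j = (1 - theta P k) * hhat P u0 s k j
     + theta P k * (real (nhat P) * hreal P j (z_it P u0 s (Suc k) j) - (real (nhat P) - 1) * hreal P j (z_it P u0 s k j))"

lemma hhat_prefix: "(\<And>j. j < k \<Longrightarrow> s j = s' j) \<Longrightarrow> hhat P u0 s k = hhat P u0 s' k"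
proof (induction k)
  case 0
  then show ?case by (simp add: fun_eq_iff)
next
  case (Suc k)
  then have "hhat P u0 s k = hhat P u0 s' k" by simp
  moreover have "z_it P u0 s (Suc k) = z_it P u0 s' (Suc k)" by (rule z_it_prefix) (use Suc in simp)
  moreover have "z_it P u0 s k = z_it P u0 s' k" by (rule z_it_prefix) (use Suc in simp)
  ultimately show ?case by (simp add: fun_eq_iff)
qed

lemma iterates_redraw:
  fixes P :: "'t::finite prob" and u0 :: "nat \<Rightarrow> real" and s :: "nat \<Rightarrow> nat" and k :: nat
  defines "z \<equiv> z_it P u0 s k" and "zt \<equiv> ztil P k (v_it P u0 s k) (z_it P u0 s k)"
  shows "z_it P u0 (s(k := i)) k = z"
    and "z_it P u0 (s(k := i)) (Suc k) = z(i := zt i)"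
    and "u_it P u0 (s(k := i)) (Suc k)
      = (\<lambda>j. v_it P u0 s k j + real (nhat P) * theta P k * ((z(i := zt i)) j - z j))"
    and "hhat P u0 (s(k := i)) (Suc k) j = (1 - theta P k) * hhat P u0 s k j
      + theta P k * (real (nhat P) * hreal P j ((z(i := zt i)) j) - (real (nhat P) - 1) * hreal P j (z j))"
proof -
  have dep: "\<And>j. j < k \<Longrightarrow> (s(k := i)) j = s j" by simp
  note prefix = z_it_prefix[OF dep] u_it_prefix[OF dep]
  show zk: "z_it P u0 (s(k := i)) k = z" by (simp add: prefix z_def)
  have "zt_it P u0 (s(k := i)) k = zt" by (simp add: zt_it_def v_it_def prefix zt_def)
  then show zS: "z_it P u0 (s(k := i)) (Suc k) = z(i := zt i)" by (simp add: z_it_Suc zk)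
  show "u_it P u0 (s(k := i)) (Suc k)
      = (\<lambda>j. v_it P u0 s k j + real (nhat P) * theta P k * ((z(i := zt i)) j - z j))"
    unfolding u_it_Suc zS by (simp add: v_it_def prefix z_def)
  show "hhat P u0 (s(k := i)) (Suc k) j = (1 - theta P k) * hhat P u0 s k j
      + theta P k * (real (nhat P) * hreal P j ((z(i := zt i)) j) - (real (nhat P) - 1) * hreal P j (z j))"
    using zS zk by (simp add: hhat_prefix[OF dep] del: fun_upd_apply)
qed

lemma Lnorm_sq_fun_upd:
  assumes "i < nhat P"
  shows "Lnorm_sq P (\<lambda>j. (z(i := a)) j - w j) = Lnorm_sq P (\<lambda>j. z j - w j) - Lc P i * (z i - w i)\<^sup>2 + Lc P i * (a - w i)\<^sup>2"
  unfolding Lnorm_sq_def using sum_fun_upd[of i "{..<nhat P}" "\<lambda>j x. Lc P j * (x - w j)\<^sup>2" z a] assms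
  by simp

lemma average_Lnorm_sq_fun_upd:
  assumes N: "1 \<le> nhat P"
  shows "(1 / real (nhat P)) * (\<Sum>i<nhat P. Lnorm_sq P (\<lambda>j. (z(i := a i)) j - w j))
       = (1 - 1 / real (nhat P)) * Lnorm_sq P (\<lambda>j. z j - w j) + (1 / real (nhat P)) * Lnorm_sq P (\<lambda>j. a j - w j)"
proof -
  have "(\<Sum>i<nhat P. Lnorm_sq P (\<lambda>j. (z(i := a i)) j - w j))
      = (\<Sum>i<nhat P. Lnorm_sq P (\<lambda>j. z j - w j) - Lc P i * (z i - w i)\<^sup>2 + Lc P i * (a i - w i)\<^sup>2)"
    by (rule sum.cong[OF refl], rule Lnorm_sq_fun_upd) simp
  also have "\<dots> = real (nhat P) * Lnorm_sq P (\<lambda>j. z j - w j) - Lnorm_sq P (\<lambda>j. z j - w j) + Lnorm_sq P (\<lambda>j. a j - w j)"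
    by (simp add: sum.distrib sum_subtractf Lnorm_sq_def)
  finally show ?thesis using N by (simp add: field_simps)
qed

lemma Lnorm_sq_diff_commute: "Lnorm_sq P (\<lambda>j. a j - b j) = Lnorm_sq P (\<lambda>j. b j - a j)"
  unfolding Lnorm_sq_def by (rule sum.cong) (auto simp: power2_commute)

lemma Lnorm_sq_nonneg: "0 < mu P \<Longrightarrow> 0 \<le> Lnorm_sq P w"
  unfolding Lnorm_sq_def by (intro sum_nonneg mult_nonneg_nonneg Lc_nonneg) auto

lemma Lnorm_sq_diff_triangle:
  assumes "0 < mu P"
  shows "Lnorm_sq P (\<lambda>j. a j - b j) \<le> 2 * Lnorm_sq P (\<lambda>j. a j - c j) + 2 * Lnorm_sq P (\<lambda>j. c j - b j)"
  unfolding Lnorm_sq_def sum_distrib_left sum.distrib[symmetric]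
proof (rule sum_mono)
  fix j
  have "(a j - b j)\<^sup>2 \<le> 2 * (a j - c j)\<^sup>2 + 2 * (c j - b j)\<^sup>2"
  proof -
    have "0 \<le> ((a j - c j) - (c j - b j))\<^sup>2" by simp
    then show ?thesis by (simp add: power2_eq_square algebra_simps)
  qed
  then have "Lc P j * (a j - b j)\<^sup>2 \<le> Lc P j * (2 * (a j - c j)\<^sup>2 + 2 * (c j - b j)\<^sup>2)"
    using Lc_nonneg[OF assms] by (rule mult_left_mono)
  then show "Lc P j * (a j - b j)\<^sup>2 \<le> 2 * (Lc P j * (a j - c j)\<^sup>2) + 2 * (Lc P j * (c j - b j)\<^sup>2)"
    by (simp add: algebra_simps)
qed



section \<open>One step of the method\<close>

definition hsum :: "'t::finite prob \<Rightarrow> (nat \<Rightarrow> real) \<Rightarrow> real" where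
  "hsum P x = (\<Sum>j<nhat P. hreal P j (x j))"

definition h_minorant :: "'t::finite prob \<Rightarrow> nat \<Rightarrow> (nat \<Rightarrow> real) \<Rightarrow> (nat \<Rightarrow> real) \<Rightarrow> (nat \<Rightarrow> real) \<Rightarrow> real" where
  "h_minorant P k v z w = (\<Sum>j<nhat P. hreal P j (ztil P k v z j) + prox_subgrad P k v z j * (w j - ztil P k v z j))"

context ardca_problem
begin

lemma in_dom_convex_comb:
  assumes "in_dom P a" "in_dom P b" "0 \<le> t" "t \<le> 1"
  shows "in_dom P (\<lambda>i. t * a i + (1 - t) * b i)"
  using assms unfolding in_dom_def by (auto intro!: add_nonneg_nonneg mult_nonneg_nonneg)

lemma sum_dfun_coordinate_steps:
  assumes "in_dom P v"
  shows "(\<Sum>i<nhat P. dfun P (v(i := v i + t * d i)))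
    \<le> real (nhat P) * dfun P v + t * (\<Sum>i<nhat P. gradd P v i * d i) + t\<^sup>2 / 2 * Lnorm_sq P d"
proof -
  have "(\<Sum>i<nhat P. dfun P (v(i := v i + t * d i)))
      \<le> (\<Sum>i<nhat P. dfun P v + t * (gradd P v i * d i) + t\<^sup>2 / 2 * (Lc P i * (d i)\<^sup>2))"
  proof (rule sum_mono)
    fix i assume "i \<in> {..<nhat P}"
    then show "dfun P (v(i := v i + t * d i)) \<le> dfun P v + t * (gradd P v i * d i) + t\<^sup>2 / 2 * (Lc P i * (d i)\<^sup>2)"
      using dfun_coordinate_smooth[OF assms, of i "t * d i"] by (simp add: power_mult_distrib mult_ac)
  qed
  also have "\<dots> = real (nhat P) * dfun P v + t * (\<Sum>i<nhat P. gradd P v i * d i) + t\<^sup>2 / 2 * Lnorm_sq P d"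
    by (simp add: sum.distrib sum_distrib_left Lnorm_sq_def)
  finally show ?thesis .
qed

lemma dfun_model_at_convex_comb:
  assumes udom: "in_dom P u" and th: "0 \<le> th" "th \<le> 1"
    and vdef: "v = (\<lambda>i. th * z i + (1 - th) * u i)"
  shows "dfun P v + th * (\<Sum>j<nhat P. gradd P v j * (w j - z j))
    \<le> th * (- Lagr P (xstar P v) w) + (1 - th) * dfun P u"
proof -
  have "th * (\<Sum>j<nhat P. gradd P v j * (w j - z j))
      = th * (\<Sum>j<nhat P. gradd P v j * (w j - v j)) + (1 - th) * (\<Sum>j<nhat P. gradd P v j * (u j - v j))"
    unfolding sum_distrib_left sum.distrib[symmetric] by (rule sum.cong) (auto simp: vdef algebra_simps)
  then have "dfun P v + th * (\<Sum>j<nhat P. gradd P v j * (w j - z j))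
      = th * (dfun P v + (\<Sum>j<nhat P. gradd P v j * (w j - v j)))
        + (1 - th) * (dfun P v + (\<Sum>j<nhat P. gradd P v j * (u j - v j)))"
    by (simp add: algebra_simps)
  also have "\<dots> \<le> th * (- Lagr P (xstar P v) w) + (1 - th) * dfun P u"
  proof -
    have "dfun P v + (\<Sum>j<nhat P. gradd P v j * (w j - v j)) = - Lagr P (xstar P v) w"
      by (rule dfun_linearisation)
    moreover have "(1 - th) * (dfun P v + (\<Sum>j<nhat P. gradd P v j * (u j - v j))) \<le> (1 - th) * dfun P u"
      using dfun_convex_ineq[OF udom, of v] th by (intro mult_left_mono) auto
    ultimately show ?thesis by simp
  qed
  finally show ?thesis .
qed

lemma prox_three_point:
  fixes k :: nat and v z w :: "nat \<Rightarrow> real"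
  defines "zt \<equiv> ztil P k v z" and "c \<equiv> real (nhat P) * theta P k"
  shows "(\<Sum>j<nhat P. gradd P v j * (zt j - z j)) + hsum P zt
    = c * Lnorm_sq P (\<lambda>j. w j - z j) + (\<Sum>j<nhat P. gradd P v j * (w j - z j)) + h_minorant P k v z w
      - c * Lnorm_sq P (\<lambda>j. zt j - z j) - c * Lnorm_sq P (\<lambda>j. w j - zt j)"
proof -
  have pj: "gradd P v j * (zt j - z j) + hreal P j (zt j)
     = c * (Lc P j * (w j - z j)\<^sup>2) + gradd P v j * (w j - z j)
       + (hreal P j (zt j) + prox_subgrad P k v z j * (w j - zt j))
       - c * (Lc P j * (zt j - z j)\<^sup>2) - c * (Lc P j * (w j - zt j)\<^sup>2)" for j
    by (simp add: prox_subgrad_def zt_def c_def power2_eq_square algebra_simps)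
  have "(\<Sum>j<nhat P. gradd P v j * (zt j - z j)) + hsum P zt
      = (\<Sum>j<nhat P. gradd P v j * (zt j - z j) + hreal P j (zt j))"
    by (simp add: hsum_def sum.distrib)
  also have "\<dots> = (\<Sum>j<nhat P. c * (Lc P j * (w j - z j)\<^sup>2) + gradd P v j * (w j - z j)
       + (hreal P j (zt j) + prox_subgrad P k v z j * (w j - zt j))
       - c * (Lc P j * (zt j - z j)\<^sup>2) - c * (Lc P j * (w j - zt j)\<^sup>2))"
    by (rule sum.cong[OF refl]) (rule pj)
  also have "\<dots> = c * Lnorm_sq P (\<lambda>j. w j - z j) + (\<Sum>j<nhat P. gradd P v j * (w j - z j)) + h_minorant P k v z w
      - c * Lnorm_sq P (\<lambda>j. zt j - z j) - c * Lnorm_sq P (\<lambda>j. w j - zt j)"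
    by (simp add: sum.distrib sum_subtractf sum_distrib_left Lnorm_sq_def h_minorant_def zt_def)
  finally show ?thesis .
qed

lemma expected_step_bound:
  fixes u z v w :: "nat \<Rightarrow> real" and hsc :: real and k :: nat
  assumes udom: "in_dom P u" and zdom: "in_dom P z"
    and vdef: "v = (\<lambda>i. theta P k * z i + (1 - theta P k) * u i)"
  shows "(1 / real (nhat P)) * (\<Sum>i<nhat P. dfun P (\<lambda>j. v j + real (nhat P) * theta P k * ((z(i := ztil P k v z i)) j - z j))
          + ((1 - theta P k) * hsc + theta P k * (real (nhat P) * hsum P (z(i := ztil P k v z i)) - (real (nhat P) - 1) * hsum P z)))
    \<le> (1 - theta P k) * (dfun P u + hsc) + theta P k * (- Lagr P (xstar P v) w + h_minorant P k v z w)
      + real (nhat P) * (theta P k)\<^sup>2 * (Lnorm_sq P (\<lambda>j. w j - z j) - Lnorm_sq P (\<lambda>j. w j - ztil P k v z j))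
      - real (nhat P) * (theta P k)\<^sup>2 / 2 * Lnorm_sq P (\<lambda>j. ztil P k v z j - z j)"
proof -
  define th NN zt where "th = theta P k" and "NN = real (nhat P)" and "zt = ztil P k v z"
  define LZ LWZ LWT where "LZ = Lnorm_sq P (\<lambda>j. zt j - z j)" and "LWZ = Lnorm_sq P (\<lambda>j. w j - z j)"
    and "LWT = Lnorm_sq P (\<lambda>j. w j - zt j)"
  define GZ GW where "GZ = (\<Sum>j<nhat P. gradd P v j * (zt j - z j))"
    and "GW = (\<Sum>j<nhat P. gradd P v j * (w j - z j))"
  have th0: "0 < th" and th1: "th \<le> 1" using theta_pos_nhat theta_le_1[OF nhat_ge_1] by (auto simp: th_def)
  have NN1: "1 \<le> NN" using nhat_ge_1 by (simp add: NN_def)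
  have vdom: "in_dom P v" unfolding vdef using in_dom_convex_comb[OF zdom udom] th0 th1 by (simp add: th_def)
  have "(\<lambda>j. v j + NN * th * ((z(i := zt i)) j - z j)) = v(i := v i + NN * th * (zt i - z i))" for i
    by (auto simp: fun_eq_iff)
  then have A: "(\<Sum>i<nhat P. dfun P (\<lambda>j. v j + NN * th * ((z(i := zt i)) j - z j)))
      \<le> NN * dfun P v + NN * th * GZ + (NN * th)\<^sup>2 / 2 * LZ"
    using sum_dfun_coordinate_steps[OF vdom, of "NN * th" "\<lambda>j. zt j - z j"]
    by (simp add: GZ_def LZ_def NN_def)
  have Hupd: "hsum P (z(i := zt i)) = hsum P z - hreal P i (z i) + hreal P i (zt i)" if "i < nhat P" for i
    unfolding hsum_def using sum_fun_upd[of i "{..<nhat P}" "\<lambda>j x. hreal P j x" z "zt i"] that by simp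
  have "(\<Sum>i<nhat P. (1 - th) * hsc + th * (NN * hsum P (z(i := zt i)) - (NN - 1) * hsum P z))
      = (\<Sum>i<nhat P. (1 - th) * hsc + th * (hsum P z + NN * (hreal P i (zt i) - hreal P i (z i))))"
    by (rule sum.cong) (auto simp: Hupd algebra_simps)
  also have "\<dots> = NN * (1 - th) * hsc + th * (NN * hsum P z + NN * (hsum P zt - hsum P z))"
    by (simp add: sum.distrib sum_distrib_left sum_subtractf hsum_def NN_def algebra_simps)
  finally have B: "(\<Sum>i<nhat P. (1 - th) * hsc + th * (NN * hsum P (z(i := zt i)) - (NN - 1) * hsum P z))
      = NN * (1 - th) * hsc + NN * th * hsum P zt"
    by (simp add: algebra_simps)
  have C: "GZ + hsum P zt = NN * th * LWZ + GW + h_minorant P k v z w - NN * th * LZ - NN * th * LWT"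
    unfolding GZ_def GW_def LZ_def LWZ_def LWT_def zt_def NN_def th_def by (rule prox_three_point)
  have D: "dfun P v + th * GW \<le> th * (- Lagr P (xstar P v) w) + (1 - th) * dfun P u"
    unfolding GW_def by (rule dfun_model_at_convex_comb[OF udom _ th1]) (use th0 vdef th_def in auto)
  have "(1 / NN) * (\<Sum>i<nhat P. dfun P (\<lambda>j. v j + NN * th * ((z(i := zt i)) j - z j))
          + ((1 - th) * hsc + th * (NN * hsum P (z(i := zt i)) - (NN - 1) * hsum P z)))
      = (1 / NN) * ((\<Sum>i<nhat P. dfun P (\<lambda>j. v j + NN * th * ((z(i := zt i)) j - z j)))
          + (\<Sum>i<nhat P. (1 - th) * hsc + th * (NN * hsum P (z(i := zt i)) - (NN - 1) * hsum P z)))"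
    by (simp add: sum.distrib)
  also have "\<dots> \<le> (1 / NN) * (NN * dfun P v + NN * th * GZ + (NN * th)\<^sup>2 / 2 * LZ + (NN * (1 - th) * hsc + NN * th * hsum P zt))"
    using A B NN1 by (intro mult_left_mono) auto
  also have "\<dots> = dfun P v + th * (GZ + hsum P zt) + NN * th\<^sup>2 / 2 * LZ + (1 - th) * hsc"
    using NN1 by (simp add: field_simps power2_eq_square)
  also have "\<dots> = (dfun P v + th * GW) + th * h_minorant P k v z w + NN * th\<^sup>2 * (LWZ - LWT) - NN * th\<^sup>2 / 2 * LZ + (1 - th) * hsc"
    unfolding C by (simp add: power2_eq_square algebra_simps)
  also have "\<dots> \<le> (1 - th) * (dfun P u + hsc) + th * (- Lagr P (xstar P v) w + h_minorant P k v z w)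
      + NN * th\<^sup>2 * (LWZ - LWT) - NN * th\<^sup>2 / 2 * LZ"
    using D by (simp add: algebra_simps)
  finally show ?thesis unfolding LWZ_def LWT_def LZ_def zt_def th_def NN_def .
qed

lemma model_val_le_D:
  assumes wdom: "in_dom P w" and wfin: "\<And>j. j < nhat P \<Longrightarrow> hfun P j (w j) < \<infinity>"
  shows "- Lagr P (xstar P v) w + h_minorant P k v z w \<le> dfun P w + hsum P w"
proof -
  have "- Lagr P (xstar P v) w \<le> dfun P w" by (rule neg_Lagr_le_dfun[OF wdom])
  moreover have "h_minorant P k v z w \<le> hsum P w"
    unfolding h_minorant_def hsum_def
  proof (rule sum_mono)
    fix j assume "j \<in> {..<nhat P}"
    then have j: "j < nhat P" by simp
    have "ereal (hreal P j (ztil P k v z j) + prox_subgrad P k v z j * (w j - ztil P k v z j)) \<le> hfun P j (w j)"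
      using prox_properties(2)[OF j, of k v z "w j"] by (simp add: prox_subgrad_def)
    then show "hreal P j (ztil P k v z j) + prox_subgrad P k v z j * (w j - ztil P k v z j) \<le> hreal P j (w j)"
      using hreal_ge wfin[OF j] by blast
  qed
  ultimately show ?thesis by simp
qed

(* In the first block this is the Fenchel-Young equality of prox_properties, in the second the
   minorant vanishes, and in the third it is nonpositive by complementary slackness. *)
lemma h_minorant_le:
  assumes wdom: "in_dom P w"
  shows "h_minorant P k v z w \<le> (\<Sum>i<nn P. prox_subgrad P k v z i * w i
            - phi P i (real (nn P) * prox_subgrad P k v z i) / real (nn P))"
proof -
  define y where "y = prox_subgrad P k v z"
  define zt where "zt = ztil P k v z"
  define n' where "n' = real (nn P)"
  define E where "E j = hreal P j (zt j) + y j * (w j - zt j)" for j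
  have minorant_split: "h_minorant P k v z w = (\<Sum>i<nn P. E i) + (\<Sum>j<pp P. E (nn P + j)) + (\<Sum>i<mm P. E (nn P + pp P + i))"
    unfolding h_minorant_def nhat_def sum_lessThan_add3 E_def zt_def y_def ..
  have E1: "E i = y i * w i - phi P i (n' * y i) / n'" if "i < nn P" for i
  proof -
    have "i < nhat P" using that by (simp add: nhat_def)
    then have "hreal P i (zt i) = y i * zt i - phi P i (n' * y i) / n'"
      using prox_properties(3)[of i k v z] that by (simp add: zt_def y_def prox_subgrad_def n'_def)
    then show ?thesis by (simp add: E_def algebra_simps)
  qed
  have E2: "E (nn P + j) = 0" if "j < pp P" for j
  proof -
    have "nn P + j < nhat P" using that by (simp add: nhat_def)
    then have "y (nn P + j) = 0 \<and> hreal P (nn P + j) (zt (nn P + j)) = 0"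
      using prox_properties(4)[of "nn P + j" k v z] that by (simp add: zt_def y_def prox_subgrad_def)
    then show ?thesis by (simp add: E_def)
  qed
  have E3: "E (nn P + pp P + i) = y (nn P + pp P + i) * w (nn P + pp P + i)"
       "y (nn P + pp P + i) * w (nn P + pp P + i) \<le> 0" if "i < mm P" for i
  proof -
    have jN: "nn P + pp P + i < nhat P" using that by (simp add: nhat_def)
    then have h: "y (nn P + pp P + i) \<le> 0 \<and> y (nn P + pp P + i) * zt (nn P + pp P + i) = 0 \<and> hreal P (nn P + pp P + i) (zt (nn P + pp P + i)) = 0"
      using prox_properties(5)[of "nn P + pp P + i" k v z] by (simp add: zt_def y_def prox_subgrad_def)
    have "E (nn P + pp P + i) = y (nn P + pp P + i) * w (nn P + pp P + i) - y (nn P + pp P + i) * zt (nn P + pp P + i)"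
      using h by (simp add: E_def algebra_simps)
    then show "E (nn P + pp P + i) = y (nn P + pp P + i) * w (nn P + pp P + i)" using h by simp
    have "0 \<le> w (nn P + pp P + i)" using wdom jN by (simp add: in_dom_def)
    then show "y (nn P + pp P + i) * w (nn P + pp P + i) \<le> 0" using h by (simp add: mult_nonpos_nonneg)
  qed
  have S1: "(\<Sum>i<nn P. E i) = (\<Sum>i<nn P. y i * w i - phi P i (n' * y i) / n')"
    by (rule sum.cong) (auto simp: E1)
  have S2: "(\<Sum>j<pp P. E (nn P + j)) = 0" by (simp add: E2)
  have S3: "(\<Sum>i<mm P. E (nn P + pp P + i)) \<le> 0"
    by (rule sum_nonpos) (use E3 in auto)
  show ?thesis using minorant_split S1 S2 S3 by (simp add: y_def n'_def)
qed

lemma model_val_le_neg_gap: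
  assumes wdom: "in_dom P w"
  shows "- Lagr P (xstar P v) w + h_minorant P k v z w
     \<le> - (delta_inner P (xstar P v) (\<lambda>i. real (nn P) * prox_subgrad P k v z i) w + fobj P (xstar P v)
          + phisum P (\<lambda>i. real (nn P) * prox_subgrad P k v z i) / real (nn P))"
proof -
  define x y n' where "x = xstar P v" and "y = prox_subgrad P k v z" and "n' = real (nn P)"
  have n'0: "n' \<noteq> 0" using n_pos by (simp add: n'_def)
  have H: "h_minorant P k v z w \<le> (\<Sum>i<nn P. y i * w i - phi P i (n' * y i) / n')"
    using h_minorant_le[OF wdom] by (simp add: y_def n'_def)
  have Lg: "Lagr P x w = fobj P x + (\<Sum>i<nn P. w i * ((Acol P i \<bullet> x) / n'))
     + (\<Sum>j<pp P. w (nn P + j) * (Brow P j \<bullet> x + bv P j))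
     + (\<Sum>i<mm P. w (nn P + pp P + i) * gc P i x)"
    by (simp add: Lagr_def n'_def)
  have Dl: "delta_inner P x (\<lambda>i. n' * y i) w = (\<Sum>i<nn P. ((Acol P i \<bullet> x - n' * y i) / n') * w i)
     + (\<Sum>j<pp P. (Brow P j \<bullet> x + bv P j) * w (nn P + j))
     + (\<Sum>i<mm P. gc P i x * w (nn P + pp P + i))"
    by (simp add: delta_inner_def n'_def)
  have Ph: "phisum P (\<lambda>i. n' * y i) / n' = (\<Sum>i<nn P. phi P i (n' * y i) / n')"
    by (simp add: phisum_def sum_divide_distrib)
  have key: "(\<Sum>i<nn P. y i * w i - phi P i (n' * y i) / n') - (\<Sum>i<nn P. w i * ((Acol P i \<bullet> x) / n'))
      = - (\<Sum>i<nn P. ((Acol P i \<bullet> x - n' * y i) / n') * w i) - (\<Sum>i<nn P. phi P i (n' * y i) / n')"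
  proof -
    have "(\<Sum>i<nn P. y i * w i - phi P i (n' * y i) / n') - (\<Sum>i<nn P. w i * ((Acol P i \<bullet> x) / n'))
        = (\<Sum>i<nn P. y i * w i - phi P i (n' * y i) / n' - w i * ((Acol P i \<bullet> x) / n'))"
      by (simp only: sum_subtractf)
    also have "\<dots> = (\<Sum>i<nn P. - (((Acol P i \<bullet> x - n' * y i) / n') * w i) - phi P i (n' * y i) / n')"
      by (rule sum.cong[OF refl]) (use n'0 in \<open>simp add: field_simps\<close>)
    also have "\<dots> = - (\<Sum>i<nn P. ((Acol P i \<bullet> x - n' * y i) / n') * w i) - (\<Sum>i<nn P. phi P i (n' * y i) / n')"
      by (simp only: sum_subtractf sum_negf)
    finally show ?thesis .
  qed
  have eqB: "(\<Sum>j<pp P. w (nn P + j) * (Brow P j \<bullet> x + bv P j)) = (\<Sum>j<pp P. (Brow P j \<bullet> x + bv P j) * w (nn P + j))"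
    by (simp add: mult.commute)
  have eqC: "(\<Sum>i<mm P. w (nn P + pp P + i) * gc P i x) = (\<Sum>i<mm P. gc P i x * w (nn P + pp P + i))"
    by (simp add: mult.commute)
  show ?thesis
    unfolding x_def[symmetric] y_def[symmetric] n'_def[symmetric]
    using H Lg Dl Ph key eqB eqC by simp
qed

end



definition hhat_sum :: "'t::finite prob \<Rightarrow> (nat \<Rightarrow> real) \<Rightarrow> (nat \<Rightarrow> nat) \<Rightarrow> nat \<Rightarrow> real" where
  "hhat_sum P u0 s k = (\<Sum>j<nhat P. hhat P u0 s k j)"

(* r stands for the combination of the earlier z^j, so that h(u^k) \<le> hhat_k follows by convexity. *)
definition ardca_inv :: "'t::finite prob \<Rightarrow> (nat \<Rightarrow> real) \<Rightarrow> (nat \<Rightarrow> nat) \<Rightarrow> nat \<Rightarrow> bool" where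
  "ardca_inv P u0 s k \<longleftrightarrow> in_dom P (z_it P u0 s k)
     \<and> (1 \<le> k \<longrightarrow> (\<forall>j<nhat P. hfun P j (z_it P u0 s k j) < \<infinity>))
     \<and> (\<forall>j<nhat P. \<exists>r \<rho>. u_it P u0 s k j = (1 - z_weight P k) * r + z_weight P k * z_it P u0 s k j
            \<and> hhat P u0 s k j = (1 - z_weight P k) * \<rho> + z_weight P k * hreal P j (z_it P u0 s k j)
            \<and> hfun P j r < \<infinity> \<and> hreal P j r \<le> \<rho>)"

context ardca_problem
begin

lemma Dfun_finite:
  assumes "\<And>j. j < nhat P \<Longrightarrow> hfun P j (x j) < \<infinity>"
  shows "Dfun P x = ereal (dfun P x + hsum P x)"
proof -
  have "(\<Sum>i<nhat P. hfun P i (x i)) = (\<Sum>i<nhat P. ereal (hreal P i (x i)))"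
    by (rule sum.cong) (auto intro: hfun_finite assms)
  then show ?thesis by (simp add: Dfun_def hsum_def sum_ereal)
qed

lemma hfun_finite_if_Dfun_finite:
  assumes "Dfun P x < \<infinity>" "j < nhat P"
  shows "hfun P j (x j) < \<infinity>"
proof (rule ccontr)
  assume "\<not> hfun P j (x j) < \<infinity>"
  then have "hfun P j (x j) = \<infinity>" by (simp add: top.not_eq_extremum)
  then have "(\<Sum>i<nhat P. hfun P i (x i)) = \<infinity>" using assms(2) by (auto simp: sum_Pinfty)
  then have "Dfun P x = \<infinity>" by (simp add: Dfun_def)
  then show False using assms(1) by simp
qed

lemma Dfun_infinite:
  assumes "j < nhat P" "hfun P j (x j) = \<infinity>"
  shows "Dfun P x = \<infinity>"
proof -
  have "(\<Sum>i<nhat P. hfun P i (x i)) = \<infinity>" using assms by (auto simp: sum_Pinfty)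
  then show ?thesis by (simp add: Dfun_def)
qed

lemma exists_Dfun_finite: "\<exists>w0. Dfun P w0 < \<infinity>"
proof -
  have ex: "\<exists>sg. \<forall>t. phi P j 0 + sg * t \<le> phi P j t" if "j < nn P" for j
  proof -
    have "convex_on UNIV (phi P j)" using phi_cvx that by auto
    from convex_on_has_subgradient[OF this, of 0] show ?thesis by auto
  qed
  define w0 where "w0 j = (if j < nn P then (SOME sg. \<forall>t. phi P j 0 + sg * t \<le> phi P j t) else 0)" for j
  have fin: "hfun P j (w0 j) < \<infinity>" if "j < nhat P" for j
  proof (cases "j < nn P")
    case True
    have "\<forall>t. phi P j 0 + w0 j * t \<le> phi P j t" unfolding w0_def using True someI_ex[OF ex[OF True]] by simp
    then have "\<forall>t. phi P j 0 + w0 j * (t - 0) \<le> phi P j t" by simp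
    then have "conjugate (phi P j) (w0 j) = ereal (w0 j * 0 - phi P j 0)" by (rule conjugate_at_subgradient)
    then show ?thesis using True by (simp add: hfun_conj_real)
  next
    case False
    then show ?thesis by (auto simp: hfun_def w0_def)
  qed
  have "Dfun P w0 < \<infinity>" using Dfun_finite[OF fin] by simp
  then show ?thesis by blast
qed

end

locale ardca_run = ardca_problem P M for P :: "'t::finite prob" and M :: real +
  fixes u0 ustar :: "nat \<Rightarrow> real"
  assumes u0_dom: "in_dom P u0" and ustar_min: "\<forall>w. Dfun P ustar \<le> Dfun P w"
    and u0_good: "(\<forall>j<nhat P. hfun P j (u0 j) < \<infinity>) \<or> nhat P = 1"
begin

lemma hfun_finite_nonneg: "hfun P j r < \<infinity> \<Longrightarrow> nn P + pp P \<le> j \<Longrightarrow> 0 \<le> r"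
  by (simp add: hfun_ineq_block split: if_splits)

lemma ustar_hfun_finite: "j < nhat P \<Longrightarrow> hfun P j (ustar j) < \<infinity>"
  using exists_Dfun_finite ustar_min hfun_finite_if_Dfun_finite by (meson le_less_trans)

lemma ustar_in_dom: "in_dom P ustar"
  unfolding in_dom_def using ustar_hfun_finite hfun_finite_nonneg by blast

lemma ardca_inv_0: "ardca_inv P u0 s 0"
  unfolding ardca_inv_def
proof (intro conjI allI impI)
  show "in_dom P (z_it P u0 s 0)" using u0_dom by (simp add: z_it_0)
  show "1 \<le> (0::nat) \<Longrightarrow> j < nhat P \<Longrightarrow> hfun P j (z_it P u0 s 0 j) < \<infinity>" for j by simp
  fix j assume j: "j < nhat P"
  show "\<exists>r \<rho>. u_it P u0 s 0 j = (1 - z_weight P 0) * r + z_weight P 0 * z_it P u0 s 0 j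
            \<and> hhat P u0 s 0 j = (1 - z_weight P 0) * \<rho> + z_weight P 0 * hreal P j (z_it P u0 s 0 j)
            \<and> hfun P j r < \<infinity> \<and> hreal P j r \<le> \<rho>"
    by (rule exI[of _ "ustar j"], rule exI[of _ "hreal P j (ustar j)"]) (use ustar_hfun_finite[OF j] in \<open>simp add: z_weight_def z_it_0 u_it_0\<close>)
qed

lemma ardca_inv_u_in_dom:
  assumes "ardca_inv P u0 s k"
  shows "in_dom P (u_it P u0 s k)"
  unfolding in_dom_def
proof (intro allI impI)
  fix j assume j: "nn P + pp P \<le> j \<and> j < nhat P"
  obtain r \<rho> where u: "u_it P u0 s k j = (1 - z_weight P k) * r + z_weight P k * z_it P u0 s k j"
    and fr: "hfun P j r < \<infinity>"
    using assms j unfolding ardca_inv_def by blast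
  have "0 \<le> r" using hfun_finite_nonneg fr j by blast
  moreover have "0 \<le> z_it P u0 s k j" using assms j unfolding ardca_inv_def in_dom_def by blast
  ultimately show "0 \<le> u_it P u0 s k j"
    using u z_weight_bounds[OF nhat_ge_1, of k] by simp
qed

lemma ardca_inv_hfun_u:
  assumes inv: "ardca_inv P u0 s k" and k: "1 \<le> k" and j: "j < nhat P"
  shows "hfun P j (u_it P u0 s k j) < \<infinity> \<and> hreal P j (u_it P u0 s k j) \<le> hhat P u0 s k j"
proof -
  obtain r \<rho> where u: "u_it P u0 s k j = (1 - z_weight P k) * r + z_weight P k * z_it P u0 s k j"
    and h: "hhat P u0 s k j = (1 - z_weight P k) * \<rho> + z_weight P k * hreal P j (z_it P u0 s k j)"
    and fr: "hfun P j r < \<infinity>" and rr: "hreal P j r \<le> \<rho>"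
    using inv j unfolding ardca_inv_def by blast
  have fz: "hfun P j (z_it P u0 s k j) < \<infinity>" using inv k j unfolding ardca_inv_def by blast
  have a0: "0 \<le> z_weight P k" and a1: "z_weight P k \<le> 1" using z_weight_bounds[OF nhat_ge_1] by auto
  have c: "hfun P j ((1 - z_weight P k) * r + (1 - (1 - z_weight P k)) * z_it P u0 s k j) < \<infinity> \<and>
        hreal P j ((1 - z_weight P k) * r + (1 - (1 - z_weight P k)) * z_it P u0 s k j) \<le> (1 - z_weight P k) * hreal P j r + (1 - (1 - z_weight P k)) * hreal P j (z_it P u0 s k j)"
    by (rule hfun_convex_comb[OF fr fz]) (use a0 a1 in auto)
  have "(1 - z_weight P k) * hreal P j r \<le> (1 - z_weight P k) * \<rho>" using rr a1 by (intro mult_left_mono) auto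
  then show ?thesis using c u h by simp
qed

lemma hfun_z_it_Suc_finite:
  assumes inv: "ardca_inv P u0 s k" and sk: "s k < nhat P" and j: "j < nhat P"
  shows "hfun P j (z_it P u0 s (Suc k) j) < \<infinity>"
proof (cases "j = s k")
  case True
  then show ?thesis
    using prox_properties(1)[OF j, of k "v_it P u0 s k" "z_it P u0 s k"] by (simp add: z_it_Suc zt_it_def)
next
  case False
  then have "z_it P u0 s (Suc k) j = z_it P u0 s k j" by (simp add: z_it_Suc)
  moreover have "hfun P j (z_it P u0 s k j) < \<infinity>"
  proof (cases "k = 0")
    case True
    have "nhat P \<noteq> 1" using False j sk by auto
    then show ?thesis using u0_good j True by (simp add: z_it_0)
  next
    case False
    then show ?thesis using inv j unfolding ardca_inv_def by simp
  qed
  ultimately show ?thesis by simp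
qed

lemma ardca_inv_Suc:
  assumes inv: "ardca_inv P u0 s k" and sk: "s k < nhat P"
  shows "ardca_inv P u0 s (Suc k)"
proof -
  define z where "z = z_it P u0 s k"
  define u where "u = u_it P u0 s k"
  define v where "v = v_it P u0 s k"
  define zt where "zt = zt_it P u0 s k"
  define i where "i = s k"
  define th where "th = theta P k"
  define NN where "NN = real (nhat P)"
  define al where "al = z_weight P k"
  have zS: "z_it P u0 s (Suc k) = z(i := zt i)" by (simp add: z_it_Suc z_def zt_def i_def)
  have uS: "u_it P u0 s (Suc k) j = (1 - th) * u j - (NN - 1) * th * z j + NN * th * (z(i := zt i)) j" for j
    by (simp add: u_it_Suc z_it_Suc v_it_def u_def z_def zt_def i_def th_def NN_def algebra_simps)
  have hS: "hhat P u0 s (Suc k) j = (1 - th) * hhat P u0 s k j + th * (NN * hreal P j ((z(i := zt i)) j) - (NN - 1) * hreal P j (z j))" for j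
    by (simp add: zS z_def th_def NN_def)
  have alS: "z_weight P (Suc k) = NN * th" by (simp add: z_weight_Suc NN_def th_def)
  have zt_eq: "zt j = ztil P k v z j" for j by (simp add: zt_def zt_it_def v_def z_def)
  have ztdom: "0 \<le> zt j" if "nn P + pp P \<le> j" "j < nhat P" for j
    using prox_properties(5)[OF that(2), of k v z] that(1) by (simp add: zt_eq)
  have th1: "th \<le> 1" using theta_le_1[OF nhat_ge_1] by (simp add: th_def)
  have NN1: "1 \<le> NN" using nhat_ge_1 by (simp add: NN_def)
  have al1: "al \<le> 1" using z_weight_bounds[OF nhat_ge_1] by (simp add: al_def)
  have bcond: "0 \<le> (1 - th) * al - (NN - 1) * th" using z_weight_shrink[OF nhat_ge_1, of k] by (simp add: al_def NN_def th_def)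
  have I1: "in_dom P (z(i := zt i))"
    using inv ztdom unfolding ardca_inv_def in_dom_def by (auto simp: z_def)
  have zfin_k: "1 \<le> k \<Longrightarrow> j < nhat P \<Longrightarrow> hfun P j (z j) < \<infinity>" for j
    using inv unfolding ardca_inv_def z_def by blast
  have I2: "\<forall>j<nhat P. hfun P j ((z(i := zt i)) j) < \<infinity>"
    using hfun_z_it_Suc_finite[OF inv sk] by (simp add: zS[symmetric])
  have I3: "\<exists>r \<rho>. u_it P u0 s (Suc k) j = (1 - z_weight P (Suc k)) * r + z_weight P (Suc k) * (z(i := zt i)) j
            \<and> hhat P u0 s (Suc k) j = (1 - z_weight P (Suc k)) * \<rho> + z_weight P (Suc k) * hreal P j ((z(i := zt i)) j)
            \<and> hfun P j r < \<infinity> \<and> hreal P j r \<le> \<rho>" if j: "j < nhat P" for j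
  proof -
    obtain r \<rho> where u: "u j = (1 - al) * r + al * z j"
      and h: "hhat P u0 s k j = (1 - al) * \<rho> + al * hreal P j (z j)"
      and fr: "hfun P j r < \<infinity>" and rr: "hreal P j r \<le> \<rho>"
      using inv j unfolding ardca_inv_def u_def z_def al_def by blast
    define a b where "a = (1 - th) * (1 - al)" and "b = (1 - th) * al - (NN - 1) * th"
    have a0: "0 \<le> a" using th1 al1 by (simp add: a_def)
    have b0: "0 \<le> b" using bcond by (simp add: b_def)
    have "b \<noteq> 0 \<Longrightarrow> 1 \<le> k" using NN1 by (cases k) (auto simp: b_def th_def al_def z_weight_def NN_def field_simps)
    then have "b \<noteq> 0 \<Longrightarrow> hfun P j (z j) < \<infinity>" using zfin_k j by blast
    then obtain r' \<rho>' where e: "a * r + b * z j = (a + b) * r'" "a * \<rho> + b * hreal P j (z j) = (a + b) * \<rho>'"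
      and fr': "hfun P j r' < \<infinity>" "hreal P j r' \<le> \<rho>'"
      using hfun_merge_weighted[OF fr rr a0 b0] by blast
    have ab: "a + b = 1 - z_weight P (Suc k)" by (simp add: alS a_def b_def algebra_simps)
    have "u_it P u0 s (Suc k) j = a * r + b * z j + NN * th * (z(i := zt i)) j"
      by (simp add: uS u a_def b_def algebra_simps)
    moreover have "hhat P u0 s (Suc k) j = a * \<rho> + b * hreal P j (z j) + NN * th * hreal P j ((z(i := zt i)) j)"
      unfolding hS h by (simp add: a_def b_def algebra_simps)
    ultimately show ?thesis using e fr' ab alS by (intro exI[of _ r'] exI[of _ \<rho>']) simp
  qed
  show ?thesis
    unfolding ardca_inv_def zS[symmetric]
    using I1 I2 I3 zS by simp
qed

lemma ardca_inv_holds: "(\<And>j. j < k \<Longrightarrow> s j < nhat P) \<Longrightarrow> ardca_inv P u0 s k"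
proof (induction k)
  case 0
  show ?case by (rule ardca_inv_0)
next
  case (Suc k)
  then show ?case using ardca_inv_Suc by simp
qed

end



section \<open>The Lyapunov function\<close>

definition surrogate_gap :: "'t::finite prob \<Rightarrow> (nat \<Rightarrow> real) \<Rightarrow> real \<Rightarrow> (nat \<Rightarrow> nat) \<Rightarrow> nat \<Rightarrow> real" where
  "surrogate_gap P u0 Ds s k = dfun P (u_it P u0 s k) + hhat_sum P u0 s k - Ds"

definition z_dist :: "'t::finite prob \<Rightarrow> (nat \<Rightarrow> real) \<Rightarrow> (nat \<Rightarrow> real) \<Rightarrow> (nat \<Rightarrow> nat) \<Rightarrow> nat \<Rightarrow> real" where
  "z_dist P u0 w s k = Lnorm_sq P (\<lambda>j. z_it P u0 s k j - w j)"

definition z_step :: "'t::finite prob \<Rightarrow> (nat \<Rightarrow> real) \<Rightarrow> (nat \<Rightarrow> nat) \<Rightarrow> nat \<Rightarrow> real" where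
  "z_step P u0 s k = Lnorm_sq P (\<lambda>j. z_it P u0 s (Suc k) j - z_it P u0 s k j)"

definition model_val :: "'t::finite prob \<Rightarrow> (nat \<Rightarrow> real) \<Rightarrow> (nat \<Rightarrow> real) \<Rightarrow> (nat \<Rightarrow> nat) \<Rightarrow> nat \<Rightarrow> real" where
  "model_val P u0 w s k = - Lagr P (xstar P (v_it P u0 s k)) w + h_minorant P k (v_it P u0 s k) (z_it P u0 s k) w"

lemma average_z_dist_redraw:
  fixes P :: "'t::finite prob" and u0 :: "nat \<Rightarrow> real" and s :: "nat \<Rightarrow> nat" and k :: nat
  assumes "1 \<le> nhat P"
  defines "z \<equiv> z_it P u0 s k" and "zt \<equiv> ztil P k (v_it P u0 s k) (z_it P u0 s k)"
  shows "(1 / real (nhat P)) * (\<Sum>i<nhat P. z_dist P u0 w (s(k := i)) (Suc k))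
    = (1 - 1 / real (nhat P)) * Lnorm_sq P (\<lambda>j. z j - w j) + (1 / real (nhat P)) * Lnorm_sq P (\<lambda>j. zt j - w j)"
  unfolding z_dist_def iterates_redraw(2) z_def zt_def by (rule average_Lnorm_sq_fun_upd[OF assms(1)])

lemma average_z_step_redraw:
  fixes P :: "'t::finite prob" and u0 :: "nat \<Rightarrow> real" and s :: "nat \<Rightarrow> nat" and k :: nat
  assumes "1 \<le> nhat P"
  defines "z \<equiv> z_it P u0 s k" and "zt \<equiv> ztil P k (v_it P u0 s k) (z_it P u0 s k)"
  shows "(1 / real (nhat P)) * (\<Sum>i<nhat P. z_step P u0 (s(k := i)) k)
    = (1 / real (nhat P)) * Lnorm_sq P (\<lambda>j. zt j - z j)"
  using average_Lnorm_sq_fun_upd[OF assms(1), of z zt z]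
  unfolding z_step_def iterates_redraw(1,2) z_def zt_def by (simp add: Lnorm_sq_def)

context ardca_run
begin

lemma lyapunov_step:
  fixes w :: "nat \<Rightarrow> real" and Ds :: real
  assumes inv: "ardca_inv P u0 s k"
  shows "(1 / real (nhat P)) * (\<Sum>i<nhat P. inv_theta_sq_prev P (Suc k) * surrogate_gap P u0 Ds (s(k := i)) (Suc k)
            + (real (nhat P))\<^sup>2 * z_dist P u0 w (s(k := i)) (Suc k) + (real (nhat P))\<^sup>2 / 2 * z_step P u0 (s(k := i)) k)
     \<le> inv_theta_sq_prev P k * surrogate_gap P u0 Ds s k + (real (nhat P))\<^sup>2 * z_dist P u0 w s k + (1 / theta P k) * (model_val P u0 w s k - Ds)"
proof -
  define z where "z = z_it P u0 s k"
  define u where "u = u_it P u0 s k"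
  define v where "v = v_it P u0 s k"
  define zt where "zt = ztil P k v z"
  define hsc where "hsc = hhat_sum P u0 s k"
  define th where "th = theta P k"
  define NN where "NN = real (nhat P)"
  have th0: "0 < th" using theta_pos_nhat by (simp add: th_def)
  have NN1: "1 \<le> NN" using nhat_ge_1 by (simp add: NN_def)
  have udom: "in_dom P u" using ardca_inv_u_in_dom[OF inv] by (simp add: u_def)
  have zdom: "in_dom P z" using inv by (simp add: ardca_inv_def z_def)
  have vdef: "v = (\<lambda>i. theta P k * z i + (1 - theta P k) * u i)" by (simp add: v_def v_it_def z_def u_def fun_eq_iff)
  have uS: "u_it P u0 (s(k := i)) (Suc k) = (\<lambda>j. v j + NN * th * ((z(i := zt i)) j - z j))" for i
    by (simp add: iterates_redraw(3) z_def zt_def v_def NN_def th_def)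
  have hSS: "hhat_sum P u0 (s(k := i)) (Suc k) = (1 - th) * hsc + th * (NN * hsum P (z(i := zt i)) - (NN - 1) * hsum P z)" for i
    unfolding hhat_sum_def iterates_redraw(4)
    by (simp add: sum.distrib sum_subtractf sum_distrib_left hsc_def hhat_sum_def hsum_def z_def zt_def v_def
        th_def NN_def algebra_simps del: fun_upd_apply)
  note core = expected_step_bound[OF udom zdom vdef, of hsc w]
  define A where "A = (1 / NN) * (\<Sum>i<nhat P. dfun P (\<lambda>j. v j + NN * th * ((z(i := zt i)) j - z j))
          + ((1 - th) * hsc + th * (NN * hsum P (z(i := zt i)) - (NN - 1) * hsum P z)))"
  define T where "T = - Lagr P (xstar P v) w + h_minorant P k v z w"
  define LWZ where "LWZ = Lnorm_sq P (\<lambda>j. z j - w j)"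
  define LWT where "LWT = Lnorm_sq P (\<lambda>j. zt j - w j)"
  define LZ where "LZ = Lnorm_sq P (\<lambda>j. zt j - z j)"
  have core': "A \<le> (1 - th) * (dfun P u + hsc) + th * T + NN * th\<^sup>2 * (LWZ - LWT) - NN * th\<^sup>2 / 2 * LZ"
    using core unfolding A_def T_def LWZ_def LWT_def LZ_def zt_def th_def NN_def
    by (simp add: Lnorm_sq_diff_commute[of P w])
  have B: "(1 / NN) * (\<Sum>i<nhat P. z_dist P u0 w (s(k := i)) (Suc k)) = (1 - 1 / NN) * LWZ + (1 / NN) * LWT"
    unfolding LWZ_def LWT_def NN_def zt_def z_def v_def by (rule average_z_dist_redraw[OF nhat_ge_1])
  have C: "(1 / NN) * (\<Sum>i<nhat P. z_step P u0 (s(k := i)) k) = (1 / NN) * LZ"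
    unfolding LZ_def NN_def zt_def z_def v_def by (rule average_z_step_redraw[OF nhat_ge_1])
  have Aeq: "(1 / NN) * (\<Sum>i<nhat P. surrogate_gap P u0 Ds (s(k := i)) (Suc k)) = A - Ds"
  proof -
    have "(\<Sum>i<nhat P. surrogate_gap P u0 Ds (s(k := i)) (Suc k)) = (\<Sum>i<nhat P. dfun P (\<lambda>j. v j + NN * th * ((z(i := zt i)) j - z j))
          + ((1 - th) * hsc + th * (NN * hsum P (z(i := zt i)) - (NN - 1) * hsum P z))) - NN * Ds"
      by (simp add: surrogate_gap_def uS hSS sum_subtractf NN_def)
    then show ?thesis using NN1 by (simp add: A_def right_diff_distrib)
  qed
  have LHS: "(1 / NN) * (\<Sum>i<nhat P. inv_theta_sq_prev P (Suc k) * surrogate_gap P u0 Ds (s(k := i)) (Suc k)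
            + NN\<^sup>2 * z_dist P u0 w (s(k := i)) (Suc k) + NN\<^sup>2 / 2 * z_step P u0 (s(k := i)) k)
      = (1 / th\<^sup>2) * (A - Ds) + NN\<^sup>2 * ((1 - 1 / NN) * LWZ + (1 / NN) * LWT) + NN\<^sup>2 / 2 * ((1 / NN) * LZ)"
  proof -
    have "(1 / NN) * (\<Sum>i<nhat P. inv_theta_sq_prev P (Suc k) * surrogate_gap P u0 Ds (s(k := i)) (Suc k)
            + NN\<^sup>2 * z_dist P u0 w (s(k := i)) (Suc k) + NN\<^sup>2 / 2 * z_step P u0 (s(k := i)) k)
        = inv_theta_sq_prev P (Suc k) * ((1 / NN) * (\<Sum>i<nhat P. surrogate_gap P u0 Ds (s(k := i)) (Suc k)))
          + NN\<^sup>2 * ((1 / NN) * (\<Sum>i<nhat P. z_dist P u0 w (s(k := i)) (Suc k)))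
          + NN\<^sup>2 / 2 * ((1 / NN) * (\<Sum>i<nhat P. z_step P u0 (s(k := i)) k))"
      by (simp add: sum.distrib sum_distrib_left[symmetric] sum_divide_distrib[symmetric] algebra_simps)
    then show ?thesis unfolding Aeq B C by (simp add: inv_theta_sq_prev_Suc th_def)
  qed
  have ck: "inv_theta_sq_prev P k = (1 - th) / th\<^sup>2" by (simp add: inv_theta_sq_prev_eq[OF nhat_ge_1] th_def)
  have scaled: "(1 / th\<^sup>2) * A \<le> (1 / th\<^sup>2) * ((1 - th) * (dfun P u + hsc) + th * T + NN * th\<^sup>2 * (LWZ - LWT) - NN * th\<^sup>2 / 2 * LZ)"
    using core' th0 by (intro mult_left_mono) auto
  have ex: "(1 / th\<^sup>2) * ((1 - th) * (dfun P u + hsc) + th * T + NN * th\<^sup>2 * (LWZ - LWT) - NN * th\<^sup>2 / 2 * LZ)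
      = ((1 - th) / th\<^sup>2) * (dfun P u + hsc) + (1 / th) * T + NN * LWZ - NN * LWT - NN / 2 * LZ"
    using th0 by (simp add: field_simps power2_eq_square)
  have ex2: "(1 / th\<^sup>2) * (A - Ds) = (1 / th\<^sup>2) * A - ((1 - th) / th\<^sup>2) * Ds - (1 / th) * Ds"
    using th0 by (simp add: field_simps power2_eq_square)
  have ex3: "NN\<^sup>2 * ((1 - 1 / NN) * LWZ + (1 / NN) * LWT) + NN\<^sup>2 / 2 * ((1 / NN) * LZ)
      = NN\<^sup>2 * LWZ - NN * LWZ + NN * LWT + NN / 2 * LZ"
    using NN1 by (simp add: field_simps power2_eq_square)
  have R: "inv_theta_sq_prev P k * surrogate_gap P u0 Ds s k + NN\<^sup>2 * z_dist P u0 w s k + (1 / th) * (model_val P u0 w s k - Ds)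
      = ((1 - th) / th\<^sup>2) * (dfun P u + hsc) - ((1 - th) / th\<^sup>2) * Ds + NN\<^sup>2 * LWZ + (1 / th) * T - (1 / th) * Ds"
    by (simp add: ck surrogate_gap_def z_dist_def model_val_def u_def hsc_def z_def[symmetric] LWZ_def T_def v_def algebra_simps)
  show ?thesis
    unfolding NN_def[symmetric] th_def[symmetric] LHS R
    using scaled ex ex2 ex3 by linarith
qed

lemma ardca_inv_seqs: "s \<in> seqs P K \<Longrightarrow> k \<le> Suc K \<Longrightarrow> ardca_inv P u0 s k"
  by (rule ardca_inv_holds) (auto intro: seqs_range)

lemma sum_lyapunov_step:
  fixes w :: "nat \<Rightarrow> real" and Ds :: real
  assumes kK: "k \<le> K"
  shows "(\<Sum>s\<in>seqs P K. inv_theta_sq_prev P (Suc k) * surrogate_gap P u0 Ds s (Suc k)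
            + (real (nhat P))\<^sup>2 * z_dist P u0 w s (Suc k) + (real (nhat P))\<^sup>2 / 2 * z_step P u0 s k)
     \<le> (\<Sum>s\<in>seqs P K. inv_theta_sq_prev P k * surrogate_gap P u0 Ds s k + (real (nhat P))\<^sup>2 * z_dist P u0 w s k
            + (1 / theta P k) * (model_val P u0 w s k - Ds))"
proof -
  define X where "X s = inv_theta_sq_prev P (Suc k) * surrogate_gap P u0 Ds s (Suc k)
            + (real (nhat P))\<^sup>2 * z_dist P u0 w s (Suc k) + (real (nhat P))\<^sup>2 / 2 * z_step P u0 s k" for s
  have "(\<Sum>s\<in>seqs P K. X s) = (\<Sum>s\<in>seqs P K. (1 / real (nhat P)) * (\<Sum>i<nhat P. X (s(k := i))))"
    by (rule sum_seqs_average_upd[OF kK nhat_ge_1, symmetric])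
  also have "\<dots> \<le> (\<Sum>s\<in>seqs P K. inv_theta_sq_prev P k * surrogate_gap P u0 Ds s k + (real (nhat P))\<^sup>2 * z_dist P u0 w s k
            + (1 / theta P k) * (model_val P u0 w s k - Ds))"
  proof (rule sum_mono)
    fix s assume s: "s \<in> seqs P K"
    have inv: "ardca_inv P u0 s k" using ardca_inv_seqs[OF s] kK by simp
    show "(1 / real (nhat P)) * (\<Sum>i<nhat P. X (s(k := i))) \<le> inv_theta_sq_prev P k * surrogate_gap P u0 Ds s k
        + (real (nhat P))\<^sup>2 * z_dist P u0 w s k + (1 / theta P k) * (model_val P u0 w s k - Ds)"
      unfolding X_def by (rule lyapunov_step[OF inv])
  qed
  finally show ?thesis unfolding X_def .
qed

definition Dopt where "Dopt = dfun P ustar + hsum P ustar"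

lemma model_val_le_Dopt: "model_val P u0 ustar s k \<le> Dopt"
  unfolding model_val_def Dopt_def by (rule model_val_le_D[OF ustar_in_dom ustar_hfun_finite])

lemma sum_lyapunov_step_opt:
  assumes kK: "k \<le> K"
  shows "(\<Sum>s\<in>seqs P K. inv_theta_sq_prev P (Suc k) * surrogate_gap P u0 Dopt s (Suc k) + (real (nhat P))\<^sup>2 * z_dist P u0 ustar s (Suc k))
     + (real (nhat P))\<^sup>2 / 2 * (\<Sum>s\<in>seqs P K. z_step P u0 s k)
     \<le> (\<Sum>s\<in>seqs P K. inv_theta_sq_prev P k * surrogate_gap P u0 Dopt s k + (real (nhat P))\<^sup>2 * z_dist P u0 ustar s k)"
proof -
  have "(\<Sum>s\<in>seqs P K. (1 / theta P k) * (model_val P u0 ustar s k - Dopt)) \<le> 0"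
    using model_val_le_Dopt theta_pos_nhat[of k] by (intro sum_nonpos mult_nonneg_nonpos) auto
  then show ?thesis
    using sum_lyapunov_step[OF kK, of Dopt ustar] by (simp add: sum.distrib sum_distrib_left)
qed

lemma lyapunov_telescope:
  assumes "k1 \<le> k2" "k2 \<le> Suc K"
  shows "(\<Sum>s\<in>seqs P K. inv_theta_sq_prev P k2 * surrogate_gap P u0 Dopt s k2 + (real (nhat P))\<^sup>2 * z_dist P u0 ustar s k2)
     + (real (nhat P))\<^sup>2 / 2 * (\<Sum>k\<in>{k1..<k2}. \<Sum>s\<in>seqs P K. z_step P u0 s k)
     \<le> (\<Sum>s\<in>seqs P K. inv_theta_sq_prev P k1 * surrogate_gap P u0 Dopt s k1 + (real (nhat P))\<^sup>2 * z_dist P u0 ustar s k1)"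
  using assms
proof (induction k2)
  case (Suc k2)
  show ?case
  proof (cases "k1 = Suc k2")
    case False
    then have "k1 \<le> k2" "k2 \<le> K" using Suc.prems by auto
    moreover have "{k1..<Suc k2} = insert k2 {k1..<k2}" using \<open>k1 \<le> k2\<close> by auto
    ultimately show ?thesis
      using Suc.IH sum_lyapunov_step_opt[of k2 K] by (simp add: distrib_left)
  qed simp
qed simp

lemma sum_lyapunov_step_gap:
  assumes kK: "k \<le> K"
  shows "(\<Sum>s\<in>seqs P K. (1 / theta P k) * (Dopt - model_val P u0 w s k))
     + (\<Sum>s\<in>seqs P K. inv_theta_sq_prev P (Suc k) * surrogate_gap P u0 Dopt s (Suc k) + (real (nhat P))\<^sup>2 * z_dist P u0 w s (Suc k))
     \<le> (\<Sum>s\<in>seqs P K. inv_theta_sq_prev P k * surrogate_gap P u0 Dopt s k + (real (nhat P))\<^sup>2 * z_dist P u0 w s k)"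
proof -
  have "0 \<le> (\<Sum>s\<in>seqs P K. (real (nhat P))\<^sup>2 / 2 * z_step P u0 s k)"
    by (intro sum_nonneg mult_nonneg_nonneg) (auto simp: z_step_def Lnorm_sq_nonneg mu_pos)
  moreover have "(\<Sum>s\<in>seqs P K. (1 / theta P k) * (Dopt - model_val P u0 w s k))
      = - (\<Sum>s\<in>seqs P K. (1 / theta P k) * (model_val P u0 w s k - Dopt))"
    by (simp add: sum_negf[symmetric] algebra_simps)
  ultimately show ?thesis using sum_lyapunov_step[OF kK, of Dopt w] by (simp add: sum.distrib)
qed

lemma lyapunov_telescope_gap:
  assumes "K0 \<le> k2" "k2 \<le> K"
  shows "(\<Sum>k=K0..k2. \<Sum>s\<in>seqs P K. (1 / theta P k) * (Dopt - model_val P u0 w s k))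
     + (\<Sum>s\<in>seqs P K. inv_theta_sq_prev P (Suc k2) * surrogate_gap P u0 Dopt s (Suc k2) + (real (nhat P))\<^sup>2 * z_dist P u0 w s (Suc k2))
     \<le> (\<Sum>s\<in>seqs P K. inv_theta_sq_prev P K0 * surrogate_gap P u0 Dopt s K0 + (real (nhat P))\<^sup>2 * z_dist P u0 w s K0)"
  using assms
proof (induction k2)
  case 0
  then show ?case using sum_lyapunov_step_gap[of 0 K w] by simp
next
  case (Suc k2)
  show ?case
  proof (cases "K0 = Suc k2")
    case True
    then show ?thesis using sum_lyapunov_step_gap[OF Suc.prems(2), of w] by simp
  next
    case False
    then have "K0 \<le> k2" using Suc.prems by simp
    then show ?thesis
      using Suc.IH Suc.prems sum_lyapunov_step_gap[OF Suc.prems(2), of w] by simp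
  qed
qed

end



section \<open>The primal-dual gap and the final bounds\<close>

lemma Exp_ereal:
  assumes "1 \<le> nhat P"
  shows "Exp P K (\<lambda>s. ereal (X s)) = ereal ((\<Sum>s\<in>seqs P K. X s) / real (card (seqs P K)))"
proof -
  have "card (seqs P K) > 0" using assms by (simp add: card_seqs)
  then show ?thesis by (simp add: Exp_def sum_ereal)
qed

context ardca_problem
begin

lemma phisum_convex:
  fixes I :: "nat set" and a :: "nat \<Rightarrow> real" and t :: "nat \<Rightarrow> nat \<Rightarrow> real"
  assumes fI: "finite I" and ne: "I \<noteq> {}" and a0: "\<And>k. k \<in> I \<Longrightarrow> 0 \<le> a k" and a1: "sum a I = 1"
  shows "phisum P (\<lambda>i. \<Sum>k\<in>I. a k * t k i) \<le> (\<Sum>k\<in>I. a k * phisum P (t k))"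
proof -
  have "phisum P (\<lambda>i. \<Sum>k\<in>I. a k * t k i) \<le> (\<Sum>i<nn P. \<Sum>k\<in>I. a k * phi P i (t k i))"
    unfolding phisum_def
  proof (rule sum_mono)
    fix i assume "i \<in> {..<nn P}"
    then have "convex_on UNIV (phi P i)" using phi_cvx by auto
    then show "phi P i (\<Sum>k\<in>I. a k * t k i) \<le> (\<Sum>k\<in>I. a k * phi P i (t k i))"
      using convex_on_sum[OF fI ne _ a1 a0, of UNIV "phi P i" "\<lambda>k. t k i"] by simp
  qed
  also have "\<dots> = (\<Sum>k\<in>I. a k * phisum P (t k))"
    by (simp add: phisum_def sum_distrib_left sum.swap[of _ "{..<nn P}"])
  finally show ?thesis .
qed

lemma delta_inner_convex:
  fixes I :: "nat set" and a :: "nat \<Rightarrow> real" and x :: "nat \<Rightarrow> real^'t" and t :: "nat \<Rightarrow> nat \<Rightarrow> real"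
  assumes fI: "finite I" and ne: "I \<noteq> {}" and a0: "\<And>k. k \<in> I \<Longrightarrow> 0 \<le> a k" and a1: "sum a I = 1"
    and wdom: "in_dom P w"
  shows "delta_inner P (\<Sum>k\<in>I. a k *\<^sub>R x k) (\<lambda>i. \<Sum>k\<in>I. a k * t k i) w
    \<le> (\<Sum>k\<in>I. a k * delta_inner P (x k) (t k) w)"
proof -
  define X where "X = (\<Sum>k\<in>I. a k *\<^sub>R x k)"
  define n' where "n' = real (nn P)"
  have dA: "(\<Sum>i<nn P. ((Acol P i \<bullet> X - (\<Sum>k\<in>I. a k * t k i)) / n') * w i)
       = (\<Sum>k\<in>I. a k * (\<Sum>i<nn P. ((Acol P i \<bullet> x k - t k i) / n') * w i))"
  proof -
    have "(\<Sum>i<nn P. ((Acol P i \<bullet> X - (\<Sum>k\<in>I. a k * t k i)) / n') * w i)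
        = (\<Sum>i<nn P. \<Sum>k\<in>I. a k * (((Acol P i \<bullet> x k - t k i) / n') * w i))"
    proof (rule sum.cong[OF refl])
      fix i
      have "Acol P i \<bullet> X = (\<Sum>k\<in>I. a k * (Acol P i \<bullet> x k))" by (simp add: X_def inner_sum_right)
      then have "Acol P i \<bullet> X - (\<Sum>k\<in>I. a k * t k i) = (\<Sum>k\<in>I. a k * (Acol P i \<bullet> x k - t k i))"
        by (simp add: sum_subtractf right_diff_distrib)
      then have "((Acol P i \<bullet> X - (\<Sum>k\<in>I. a k * t k i)) / n') * w i = (\<Sum>k\<in>I. a k * (Acol P i \<bullet> x k - t k i)) * (w i / n')"
        by simp
      also have "\<dots> = (\<Sum>k\<in>I. a k * (Acol P i \<bullet> x k - t k i) * (w i / n'))"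
        by (rule sum_distrib_right)
      also have "\<dots> = (\<Sum>k\<in>I. a k * (((Acol P i \<bullet> x k - t k i) / n') * w i))"
        by (rule sum.cong) auto
      finally show "((Acol P i \<bullet> X - (\<Sum>k\<in>I. a k * t k i)) / n') * w i = (\<Sum>k\<in>I. a k * (((Acol P i \<bullet> x k - t k i) / n') * w i))" .
    qed
    also have "\<dots> = (\<Sum>k\<in>I. a k * (\<Sum>i<nn P. ((Acol P i \<bullet> x k - t k i) / n') * w i))"
      by (simp add: sum_distrib_left sum.swap[of _ "{..<nn P}"])
    finally show ?thesis .
  qed
  have dB: "(\<Sum>j<pp P. (Brow P j \<bullet> X + bv P j) * w (nn P + j))
       = (\<Sum>k\<in>I. a k * (\<Sum>j<pp P. (Brow P j \<bullet> x k + bv P j) * w (nn P + j)))"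
  proof -
    have "(\<Sum>j<pp P. (Brow P j \<bullet> X + bv P j) * w (nn P + j))
        = (\<Sum>j<pp P. \<Sum>k\<in>I. a k * ((Brow P j \<bullet> x k + bv P j) * w (nn P + j)))"
    proof (rule sum.cong[OF refl])
      fix j
      have "Brow P j \<bullet> X + bv P j = (\<Sum>k\<in>I. a k * (Brow P j \<bullet> x k)) + (\<Sum>k\<in>I. a k) * bv P j"
        using a1 by (simp add: X_def inner_sum_right)
      also have "\<dots> = (\<Sum>k\<in>I. a k * (Brow P j \<bullet> x k + bv P j))"
        by (simp add: sum.distrib sum_distrib_right distrib_left)
      finally show "(Brow P j \<bullet> X + bv P j) * w (nn P + j) = (\<Sum>k\<in>I. a k * ((Brow P j \<bullet> x k + bv P j) * w (nn P + j)))"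
        by (simp add: sum_distrib_right mult.assoc)
    qed
    also have "\<dots> = (\<Sum>k\<in>I. a k * (\<Sum>j<pp P. (Brow P j \<bullet> x k + bv P j) * w (nn P + j)))"
      by (simp add: sum_distrib_left sum.swap[of _ "{..<pp P}"])
    finally show ?thesis .
  qed
  have dC: "(\<Sum>i<mm P. gc P i X * w (nn P + pp P + i))
       \<le> (\<Sum>k\<in>I. a k * (\<Sum>i<mm P. gc P i (x k) * w (nn P + pp P + i)))"
  proof -
    have "(\<Sum>i<mm P. gc P i X * w (nn P + pp P + i))
        \<le> (\<Sum>i<mm P. \<Sum>k\<in>I. a k * (gc P i (x k) * w (nn P + pp P + i)))"
    proof (rule sum_mono)
      fix i assume i: "i \<in> {..<mm P}"
      have w0: "0 \<le> w (nn P + pp P + i)" using wdom i by (simp add: in_dom_def nhat_def)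
      have "convex_on UNIV (gc P i)" using g_cvx i by auto
      then have "gc P i X \<le> (\<Sum>k\<in>I. a k * gc P i (x k))"
        unfolding X_def by (rule convex_on_sum[OF fI ne _ a1 a0]) auto
      then have "gc P i X * w (nn P + pp P + i) \<le> (\<Sum>k\<in>I. a k * gc P i (x k)) * w (nn P + pp P + i)"
        using w0 by (rule mult_right_mono)
      then show "gc P i X * w (nn P + pp P + i) \<le> (\<Sum>k\<in>I. a k * (gc P i (x k) * w (nn P + pp P + i)))"
        by (simp add: sum_distrib_right mult.assoc)
    qed
    also have "\<dots> = (\<Sum>k\<in>I. a k * (\<Sum>i<mm P. gc P i (x k) * w (nn P + pp P + i)))"
      by (simp add: sum_distrib_left sum.swap[of _ "{..<mm P}"])
    finally show ?thesis .
  qed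
  show ?thesis
    unfolding X_def[symmetric] delta_inner_def n'_def[symmetric]
    using dA dB dC by (simp add: sum.distrib distrib_left)
qed

lemma gap_convex:
  fixes I :: "nat set" and a :: "nat \<Rightarrow> real" and x :: "nat \<Rightarrow> real^'t" and t :: "nat \<Rightarrow> nat \<Rightarrow> real"
  assumes fI: "finite I" and ne: "I \<noteq> {}" and a0: "\<And>k. k \<in> I \<Longrightarrow> 0 \<le> a k" and a1: "sum a I = 1"
    and wdom: "in_dom P w"
  shows "delta_inner P (\<Sum>k\<in>I. a k *\<^sub>R x k) (\<lambda>i. \<Sum>k\<in>I. a k * t k i) w + fobj P (\<Sum>k\<in>I. a k *\<^sub>R x k)
          + phisum P (\<lambda>i. \<Sum>k\<in>I. a k * t k i) / real (nn P)
     \<le> (\<Sum>k\<in>I. a k * (delta_inner P (x k) (t k) w + fobj P (x k) + phisum P (t k) / real (nn P)))"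
proof -
  define X where "X = (\<Sum>k\<in>I. a k *\<^sub>R x k)"
  define n' where "n' = real (nn P)"
  have n'0: "0 < n'" using n_pos by (simp add: n'_def)
  have F: "fobj P X \<le> (\<Sum>k\<in>I. a k * fobj P (x k))"
    unfolding X_def by (rule convex_on_sum[OF fI ne fobj_convex a1 a0]) auto
  have D: "delta_inner P X (\<lambda>i. \<Sum>k\<in>I. a k * t k i) w \<le> (\<Sum>k\<in>I. a k * delta_inner P (x k) (t k) w)"
    unfolding X_def by (rule delta_inner_convex[OF fI ne a0 a1 wdom])
  have "phisum P (\<lambda>i. \<Sum>k\<in>I. a k * t k i) / n' \<le> (\<Sum>k\<in>I. a k * phisum P (t k)) / n'"
    using phisum_convex[OF fI ne a0 a1] n'0 by (simp add: divide_right_mono)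
  then have Ph: "phisum P (\<lambda>i. \<Sum>k\<in>I. a k * t k i) / n' \<le> (\<Sum>k\<in>I. a k * (phisum P (t k) / n'))"
    by (simp add: sum_divide_distrib)
  show ?thesis
    unfolding X_def[symmetric] n'_def[symmetric]
    using D F Ph by (simp add: sum.distrib distrib_left)
qed

end



lemma y_it_eq_prox_subgrad: "y_it P u0 s k i = prox_subgrad P k (v_it P u0 s k) (z_it P u0 s k) i"
  by (simp add: y_it_def prox_subgrad_def zt_it_def algebra_simps)


context ardca_run
begin

lemma Dfun_ustar: "Dfun P ustar = ereal Dopt"
  unfolding Dopt_def by (rule Dfun_finite[OF ustar_hfun_finite])

lemma surrogate_gap_nonneg:
  assumes s: "s \<in> seqs P K" and k1: "1 \<le> k" and kK: "k \<le> Suc K"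
  shows "0 \<le> surrogate_gap P u0 Dopt s k"
proof -
  have inv: "ardca_inv P u0 s k" using ardca_inv_seqs[OF s kK] .
  have uf: "hfun P j (u_it P u0 s k j) < \<infinity> \<and> hreal P j (u_it P u0 s k j) \<le> hhat P u0 s k j" if "j < nhat P" for j
    using ardca_inv_hfun_u[OF inv k1 that] .
  have "Dfun P (u_it P u0 s k) = ereal (dfun P (u_it P u0 s k) + hsum P (u_it P u0 s k))"
    using Dfun_finite uf by blast
  then have "Dopt \<le> dfun P (u_it P u0 s k) + hsum P (u_it P u0 s k)" using ustar_min Dfun_ustar by (metis ereal_less_eq(3))
  moreover have "hsum P (u_it P u0 s k) \<le> hhat_sum P u0 s k" unfolding hsum_def hhat_sum_def by (rule sum_mono) (use uf in auto)
  ultimately show ?thesis by (simp add: surrogate_gap_def)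
qed

definition lyap0 where "lyap0 = inv_theta_sq_prev P 0 * (dfun P u0 + hsum P u0 - Dopt) + (real (nhat P))\<^sup>2 * Lnorm_sq P (\<lambda>j. u0 j - ustar j)"

lemma lyapunov_0: "inv_theta_sq_prev P 0 * surrogate_gap P u0 Dopt s 0 + (real (nhat P))\<^sup>2 * z_dist P u0 ustar s 0 = lyap0"
  by (simp add: lyap0_def surrogate_gap_def z_dist_def u_it_0 z_it_0 hhat_sum_def hsum_def)

lemma weighted_surrogate_gap_nonneg:
  assumes s: "s \<in> seqs P K" and kK: "k \<le> Suc K"
  shows "0 \<le> inv_theta_sq_prev P k * surrogate_gap P u0 Dopt s k"
proof (cases "k = 0")
  case False
  then show ?thesis using surrogate_gap_nonneg[OF s _ kK] inv_theta_sq_prev_nonneg[OF nhat_ge_1, of k] by simp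
next
  case True
  show ?thesis
  proof (cases "nhat P = 1")
    case True
    then show ?thesis using \<open>k = 0\<close> by (simp add: inv_theta_sq_prev_def)
  next
    case False
    then have fin: "\<forall>j<nhat P. hfun P j (u0 j) < \<infinity>" using u0_good by blast
    have "Dfun P u0 = ereal (dfun P u0 + hsum P u0)" using Dfun_finite fin by blast
    then have "Dopt \<le> dfun P u0 + hsum P u0" using ustar_min Dfun_ustar by (metis ereal_less_eq(3))
    then have "0 \<le> surrogate_gap P u0 Dopt s 0" by (simp add: surrogate_gap_def hhat_sum_def hsum_def u_it_0)
    then show ?thesis using True inv_theta_sq_prev_nonneg[OF nhat_ge_1, of 0] by simp
  qed
qed

lemma lyapunov_bound:
  assumes k2: "k2 \<le> Suc K"
  shows "(\<Sum>s\<in>seqs P K. inv_theta_sq_prev P k2 * surrogate_gap P u0 Dopt s k2 + (real (nhat P))\<^sup>2 * z_dist P u0 ustar s k2)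
     + (real (nhat P))\<^sup>2 / 2 * (\<Sum>k\<in>{0..<k2}. \<Sum>s\<in>seqs P K. z_step P u0 s k)
     \<le> real (card (seqs P K)) * lyap0"
  using lyapunov_telescope[of 0 k2 K] k2 by (simp add: lyapunov_0)

lemma z_step_nonneg: "0 \<le> z_step P u0 s k" by (simp add: z_step_def Lnorm_sq_nonneg mu_pos)
lemma z_dist_nonneg: "0 \<le> z_dist P u0 w s k" by (simp add: z_dist_def Lnorm_sq_nonneg mu_pos)

lemma sum_z_dist_bound:
  shows "(real (nhat P))\<^sup>2 * (\<Sum>s\<in>seqs P K. z_dist P u0 ustar s (Suc K)) \<le> real (card (seqs P K)) * lyap0"
proof -
  have a: "0 \<le> (\<Sum>s\<in>seqs P K. inv_theta_sq_prev P (Suc K) * surrogate_gap P u0 Dopt s (Suc K))"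
    by (rule sum_nonneg) (use weighted_surrogate_gap_nonneg in auto)
  have b: "0 \<le> (real (nhat P))\<^sup>2 / 2 * (\<Sum>k\<in>{0..<Suc K}. \<Sum>s\<in>seqs P K. z_step P u0 s k)"
    by (intro mult_nonneg_nonneg sum_nonneg z_step_nonneg) auto
  show ?thesis using lyapunov_bound[of "Suc K" K] a b by (simp add: sum.distrib sum_distrib_left)
qed

lemma sum_z_steps_bound:
  shows "(real (nhat P))\<^sup>2 / 2 * (\<Sum>k=K0..K. \<Sum>s\<in>seqs P K. z_step P u0 s k) \<le> real (card (seqs P K)) * lyap0"
proof -
  have a: "0 \<le> (\<Sum>s\<in>seqs P K. inv_theta_sq_prev P (Suc K) * surrogate_gap P u0 Dopt s (Suc K) + (real (nhat P))\<^sup>2 * z_dist P u0 ustar s (Suc K))"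
    by (rule sum_nonneg) (use weighted_surrogate_gap_nonneg z_dist_nonneg in \<open>auto intro!: add_nonneg_nonneg\<close>)
  have "(\<Sum>k=K0..K. \<Sum>s\<in>seqs P K. z_step P u0 s k) \<le> (\<Sum>k\<in>{0..<Suc K}. \<Sum>s\<in>seqs P K. z_step P u0 s k)"
    by (rule sum_mono2) (auto intro!: sum_nonneg z_step_nonneg)
  then have "(real (nhat P))\<^sup>2 / 2 * (\<Sum>k=K0..K. \<Sum>s\<in>seqs P K. z_step P u0 s k) \<le> (real (nhat P))\<^sup>2 / 2 * (\<Sum>k\<in>{0..<Suc K}. \<Sum>s\<in>seqs P K. z_step P u0 s k)"
    by (rule mult_left_mono) simp
  then show ?thesis using lyapunov_bound[of "Suc K" K] a by simp
qed

lemma sum_D_bound: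
  shows "(\<Sum>s\<in>seqs P K. (1 / (theta P K)\<^sup>2) * (dfun P (u_it P u0 s (Suc K)) + hsum P (u_it P u0 s (Suc K)) - Dopt)
           + (real (nhat P))\<^sup>2 * z_dist P u0 ustar s (Suc K)) \<le> real (card (seqs P K)) * lyap0"
proof -
  have le: "(1 / (theta P K)\<^sup>2) * (dfun P (u_it P u0 s (Suc K)) + hsum P (u_it P u0 s (Suc K)) - Dopt)
      \<le> inv_theta_sq_prev P (Suc K) * surrogate_gap P u0 Dopt s (Suc K)" if s: "s \<in> seqs P K" for s
  proof -
    have inv: "ardca_inv P u0 s (Suc K)" using ardca_inv_seqs[OF s] by simp
    have "hsum P (u_it P u0 s (Suc K)) \<le> hhat_sum P u0 s (Suc K)"
      unfolding hsum_def hhat_sum_def by (rule sum_mono) (use ardca_inv_hfun_u[OF inv] in auto)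
    then show ?thesis by (simp add: inv_theta_sq_prev_Suc surrogate_gap_def divide_right_mono)
  qed
  have b: "0 \<le> (real (nhat P))\<^sup>2 / 2 * (\<Sum>k\<in>{0..<Suc K}. \<Sum>s\<in>seqs P K. z_step P u0 s k)"
    by (intro mult_nonneg_nonneg sum_nonneg z_step_nonneg) auto
  have "(\<Sum>s\<in>seqs P K. (1 / (theta P K)\<^sup>2) * (dfun P (u_it P u0 s (Suc K)) + hsum P (u_it P u0 s (Suc K)) - Dopt)
           + (real (nhat P))\<^sup>2 * z_dist P u0 ustar s (Suc K))
      \<le> (\<Sum>s\<in>seqs P K. inv_theta_sq_prev P (Suc K) * surrogate_gap P u0 Dopt s (Suc K) + (real (nhat P))\<^sup>2 * z_dist P u0 ustar s (Suc K))"
    by (rule sum_mono) (use le in auto)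
  then show ?thesis using lyapunov_bound[of "Suc K" K] b by linarith
qed

definition averaged_gap where
  "averaged_gap w K0 K s = delta_inner P (xhat P u0 s K0 K) (yhat P u0 s K0 K) w + fobj P (xhat P u0 s K0 K)
      + phisum P (yhat P u0 s K0 K) / real (nn P)"

lemma averaged_gap_le_model_sum:
  assumes wdom: "in_dom P w" and K0K: "K0 \<le> K"
  shows "(\<Sum>k=K0..K. 1 / theta P k) * (averaged_gap w K0 K s + Dopt)
    \<le> (\<Sum>k=K0..K. (1 / theta P k) * (Dopt - model_val P u0 w s k))"
proof -
  define S where "S = (\<Sum>k=K0..K. 1 / theta P k)"
  have Spos: "0 < S" unfolding S_def using K0K theta_pos_nhat by (intro sum_pos) auto
  define G where "G s k = delta_inner P (xstar P (v_it P u0 s k)) (\<lambda>i. real (nn P) * prox_subgrad P k (v_it P u0 s k) (z_it P u0 s k) i) w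
          + fobj P (xstar P (v_it P u0 s k)) + phisum P (\<lambda>i. real (nn P) * prox_subgrad P k (v_it P u0 s k) (z_it P u0 s k) i) / real (nn P)" for s k
  have GT: "G s k + Dopt \<le> Dopt - model_val P u0 w s k" for s k
    using model_val_le_neg_gap[OF wdom, of "v_it P u0 s k" k "z_it P u0 s k"] by (simp add: G_def model_val_def)
  have jen: "S * (averaged_gap w K0 K s + Dopt) \<le> (\<Sum>k=K0..K. (1 / theta P k) * (G s k + Dopt))"
  proof -
    define a where "a k = (1 / theta P k) / S" for k
    have a0: "0 \<le> a k" for k using theta_pos_nhat[of k] Spos by (simp add: a_def)
    have "sum a {K0..K} = (\<Sum>k=K0..K. 1 / theta P k) / S" unfolding a_def by (rule sum_divide_distrib[symmetric])
    then have a1: "sum a {K0..K} = 1" using Spos by (simp add: S_def)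
    have xh: "xhat P u0 s K0 K = (\<Sum>k=K0..K. a k *\<^sub>R xstar P (v_it P u0 s k))"
      by (simp add: xhat_def a_def S_def scaleR_sum_right mult.commute)
    have yh: "yhat P u0 s K0 K = (\<lambda>i. \<Sum>k=K0..K. a k * (real (nn P) * prox_subgrad P k (v_it P u0 s k) (z_it P u0 s k) i))"
      by (simp add: fun_eq_iff yhat_def a_def S_def y_it_eq_prox_subgrad sum_divide_distrib)
    have "averaged_gap w K0 K s \<le> (\<Sum>k=K0..K. a k * G s k)"
      unfolding averaged_gap_def xh yh G_def
      by (rule gap_convex[OF _ _ _ a1 wdom]) (use K0K a0 in auto)
    then have "S * averaged_gap w K0 K s \<le> S * (\<Sum>k=K0..K. a k * G s k)" using Spos by simp
    also have "\<dots> = (\<Sum>k=K0..K. (1 / theta P k) * G s k)"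
      using Spos by (simp add: sum_distrib_left a_def)
    finally have "S * averaged_gap w K0 K s \<le> (\<Sum>k=K0..K. (1 / theta P k) * G s k)" .
    moreover have "S * Dopt = (\<Sum>k=K0..K. (1 / theta P k) * Dopt)" by (simp add: S_def sum_distrib_right)
    ultimately show ?thesis by (simp add: distrib_left sum.distrib)
  qed
  also have "\<dots> \<le> (\<Sum>k=K0..K. (1 / theta P k) * (Dopt - model_val P u0 w s k))"
    using GT theta_pos_nhat by (intro sum_mono mult_left_mono) (auto simp: less_imp_le)
  finally show ?thesis unfolding S_def .
qed

lemma sum_gap_bound:
  assumes wdom: "in_dom P w" and K0K: "K0 \<le> K"
  shows "(\<Sum>s\<in>seqs P K. (\<Sum>k=K0..K. 1 / theta P k) * (averaged_gap w K0 K s + Dopt))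
     \<le> real (card (seqs P K)) * (2 * lyap0 + 2 * (real (nhat P))\<^sup>2 * Lnorm_sq P (\<lambda>j. w j - ustar j))"
proof -
  define S where "S = (\<Sum>k=K0..K. 1 / theta P k)"
  define NN where "NN = real (nhat P)"
  define cs where "cs = real (card (seqs P K))"
  have "(\<Sum>s\<in>seqs P K. S * (averaged_gap w K0 K s + Dopt))
      \<le> (\<Sum>s\<in>seqs P K. \<Sum>k=K0..K. (1 / theta P k) * (Dopt - model_val P u0 w s k))"
    unfolding S_def using averaged_gap_le_model_sum[OF wdom K0K] by (rule sum_mono)
  then have step1: "(\<Sum>s\<in>seqs P K. S * (averaged_gap w K0 K s + Dopt))
      \<le> (\<Sum>k=K0..K. \<Sum>s\<in>seqs P K. (1 / theta P k) * (Dopt - model_val P u0 w s k))"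
    by (simp add: sum.swap[of _ "seqs P K"])
  note tg = lyapunov_telescope_gap[OF K0K order_refl, where w = w]
  have phi_nonneg: "0 \<le> (\<Sum>s\<in>seqs P K. inv_theta_sq_prev P (Suc K) * surrogate_gap P u0 Dopt s (Suc K) + NN\<^sup>2 * z_dist P u0 w s (Suc K))"
    by (rule sum_nonneg) (use weighted_surrogate_gap_nonneg z_dist_nonneg in \<open>auto intro!: add_nonneg_nonneg\<close>)
  have K0b: "(\<Sum>s\<in>seqs P K. inv_theta_sq_prev P K0 * surrogate_gap P u0 Dopt s K0 + NN\<^sup>2 * z_dist P u0 w s K0)
      \<le> (\<Sum>s\<in>seqs P K. 2 * (inv_theta_sq_prev P K0 * surrogate_gap P u0 Dopt s K0 + NN\<^sup>2 * z_dist P u0 ustar s K0) + 2 * NN\<^sup>2 * Lnorm_sq P (\<lambda>j. w j - ustar j))"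
  proof (rule sum_mono)
    fix s assume s: "s \<in> seqs P K"
    have gap_nonneg: "0 \<le> inv_theta_sq_prev P K0 * surrogate_gap P u0 Dopt s K0" using weighted_surrogate_gap_nonneg[OF s] K0K by simp
    have "z_dist P u0 w s K0 \<le> 2 * z_dist P u0 ustar s K0 + 2 * Lnorm_sq P (\<lambda>j. ustar j - w j)"
      unfolding z_dist_def by (rule Lnorm_sq_diff_triangle[OF mu_pos])
    then have "NN\<^sup>2 * z_dist P u0 w s K0 \<le> NN\<^sup>2 * (2 * z_dist P u0 ustar s K0 + 2 * Lnorm_sq P (\<lambda>j. w j - ustar j))"
      by (intro mult_left_mono) (auto simp: Lnorm_sq_diff_commute[of P ustar w])
    then show "inv_theta_sq_prev P K0 * surrogate_gap P u0 Dopt s K0 + NN\<^sup>2 * z_dist P u0 w s K0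
      \<le> 2 * (inv_theta_sq_prev P K0 * surrogate_gap P u0 Dopt s K0 + NN\<^sup>2 * z_dist P u0 ustar s K0) + 2 * NN\<^sup>2 * Lnorm_sq P (\<lambda>j. w j - ustar j)"
      using gap_nonneg by (simp add: algebra_simps)
  qed
  have lyap_K0: "(\<Sum>s\<in>seqs P K. inv_theta_sq_prev P K0 * surrogate_gap P u0 Dopt s K0 + NN\<^sup>2 * z_dist P u0 ustar s K0) \<le> cs * lyap0"
  proof -
    have b: "0 \<le> NN\<^sup>2 / 2 * (\<Sum>k\<in>{0..<K0}. \<Sum>s\<in>seqs P K. z_step P u0 s k)"
      by (intro mult_nonneg_nonneg sum_nonneg z_step_nonneg) auto
    show ?thesis using lyapunov_bound[of K0 K] K0K b by (simp add: NN_def cs_def)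
  qed
  have "(\<Sum>s\<in>seqs P K. S * (averaged_gap w K0 K s + Dopt))
      \<le> (\<Sum>s\<in>seqs P K. 2 * (inv_theta_sq_prev P K0 * surrogate_gap P u0 Dopt s K0 + NN\<^sup>2 * z_dist P u0 ustar s K0) + 2 * NN\<^sup>2 * Lnorm_sq P (\<lambda>j. w j - ustar j))"
    using step1 tg phi_nonneg K0b by (simp add: NN_def)
  also have "\<dots> = 2 * (\<Sum>s\<in>seqs P K. inv_theta_sq_prev P K0 * surrogate_gap P u0 Dopt s K0 + NN\<^sup>2 * z_dist P u0 ustar s K0) + cs * (2 * NN\<^sup>2 * Lnorm_sq P (\<lambda>j. w j - ustar j))"
    by (simp add: sum.distrib sum_distrib_left cs_def)
  also have "\<dots> \<le> 2 * (cs * lyap0) + cs * (2 * NN\<^sup>2 * Lnorm_sq P (\<lambda>j. w j - ustar j))"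
    using lyap_K0 by simp
  finally show ?thesis by (simp add: S_def NN_def cs_def algebra_simps)
qed

lemma Dfun_u0_diff:
  assumes "nhat P \<noteq> 1"
  shows "Dfun P u0 - Dfun P ustar = ereal (dfun P u0 + hsum P u0 - Dopt)"
  using u0_good assms Dfun_finite[of u0] Dfun_ustar by auto

lemma initial_bound_eq_lyap0:
  "ereal (1 - theta P 0) * (Dfun P u0 - Dfun P ustar) + ereal (Lnorm_sq P (\<lambda>i. u0 i - ustar i))
   = ereal (lyap0 / (real (nhat P))\<^sup>2)"
proof (cases "nhat P = 1")
  case True
  then have z: "ereal (1 - theta P 0) * (Dfun P u0 - Dfun P ustar) = 0" by simp
  show ?thesis unfolding z using True by (simp add: lyap0_def inv_theta_sq_prev_def)
next
  case False
  have "(1 - 1 / real (nhat P)) * (dfun P u0 + hsum P u0 - Dopt) + Lnorm_sq P (\<lambda>i. u0 i - ustar i)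
      = lyap0 / (real (nhat P))\<^sup>2"
    using nhat_ge_1 by (simp add: lyap0_def inv_theta_sq_prev_def field_simps power2_eq_square)
  then show ?thesis using Dfun_u0_diff[OF False] by simp
qed

lemma gap_bound_rhs_eq:
  "ereal (2 * ((real (nhat P))\<^sup>2 - real (nhat P))) * (Dfun P u0 - Dfun P ustar)
     + ereal (2 * (real (nhat P))\<^sup>2 * Lnorm_sq P (\<lambda>i. u0 i - ustar i)
              + 2 * (real (nhat P))\<^sup>2 * Lnorm_sq P (\<lambda>i. u i - ustar i))
   = ereal (2 * lyap0 + 2 * (real (nhat P))\<^sup>2 * Lnorm_sq P (\<lambda>i. u i - ustar i))"
proof (cases "nhat P = 1")
  case True
  then have z: "ereal (2 * ((real (nhat P))\<^sup>2 - real (nhat P))) * (Dfun P u0 - Dfun P ustar) = 0" by simp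
  show ?thesis unfolding z using True by (simp add: lyap0_def inv_theta_sq_prev_def)
next
  case False
  then show ?thesis using Dfun_u0_diff[OF False] by (simp add: lyap0_def inv_theta_sq_prev_def algebra_simps)
qed

lemma Exp_ereal_le_iff:
  "Exp P K (\<lambda>s. ereal (X s)) \<le> ereal B \<longleftrightarrow> (\<Sum>s\<in>seqs P K. X s) \<le> real (card (seqs P K)) * B"
  using Exp_ereal[OF nhat_ge_1, of K X] nhat_ge_1
  by (simp add: card_seqs pos_divide_le_eq mult.commute)

lemma expected_gap_bound:
  assumes u_dom: "in_dom P u" and K0K: "K0 \<le> K"
  shows "ereal (1 / (theta P K)\<^sup>2 - inv_theta_sq_prev P K0) *
       Exp P K (\<lambda>s. ereal (delta_inner P (xhat P u0 s K0 K) (yhat P u0 s K0 K) u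
                           + fobj P (xhat P u0 s K0 K) + phisum P (yhat P u0 s K0 K) / real (nn P))
                    + Dfun P ustar)
     \<le> ereal (2 * ((real (nhat P))\<^sup>2 - real (nhat P))) * (Dfun P u0 - Dfun P ustar)
       + ereal (2 * (real (nhat P))\<^sup>2 * Lnorm_sq P (\<lambda>i. u0 i - ustar i)
                + 2 * (real (nhat P))\<^sup>2 * Lnorm_sq P (\<lambda>i. u i - ustar i))"
proof -
  define coef where "coef = (\<Sum>k=K0..K. 1 / theta P k)"
  have coef: "1 / (theta P K)\<^sup>2 - inv_theta_sq_prev P K0 = coef"
    unfolding coef_def by (rule sum_inv_theta[OF nhat_ge_1 K0K, symmetric])
  have "Exp P K (\<lambda>s. ereal (coef * (averaged_gap u K0 K s + Dopt)))
      \<le> ereal (2 * lyap0 + 2 * (real (nhat P))\<^sup>2 * Lnorm_sq P (\<lambda>i. u i - ustar i))"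
    unfolding Exp_ereal_le_iff coef_def by (rule sum_gap_bound[OF u_dom K0K])
  moreover have "Exp P K (\<lambda>s. ereal (coef * (averaged_gap u K0 K s + Dopt)))
      = ereal coef * Exp P K (\<lambda>s. ereal (averaged_gap u K0 K s + Dopt))"
    using Exp_ereal[OF nhat_ge_1] by (simp add: sum_distrib_left)
  ultimately show ?thesis unfolding coef gap_bound_rhs_eq unfolding Dfun_ustar by (simp add: averaged_gap_def)
qed

lemma expected_z_steps_bound:
  "ereal (1/2) * (\<Sum>k=K0..K. Exp P K (\<lambda>s. ereal (Lnorm_sq P (\<lambda>i. z_it P u0 s (Suc k) i - z_it P u0 s k i))))
     \<le> ereal (1 - theta P 0) * (Dfun P u0 - Dfun P ustar) + ereal (Lnorm_sq P (\<lambda>i. u0 i - ustar i))"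
proof -
  define cs where "cs = real (card (seqs P K))"
  have cs0: "0 < cs" using nhat_ge_1 by (simp add: cs_def card_seqs)
  have "(real (nhat P))\<^sup>2 / 2 * (\<Sum>k=K0..K. \<Sum>s\<in>seqs P K. z_step P u0 s k) \<le> cs * lyap0"
    using sum_z_steps_bound by (simp add: cs_def)
  then have le: "1 / 2 * (\<Sum>k=K0..K. (\<Sum>s\<in>seqs P K. z_step P u0 s k) / cs) \<le> lyap0 / (real (nhat P))\<^sup>2"
    using nhat_ge_1 cs0 by (simp add: sum_divide_distrib[symmetric] field_simps)
  have "(\<Sum>k=K0..K. Exp P K (\<lambda>s. ereal (Lnorm_sq P (\<lambda>i. z_it P u0 s (Suc k) i - z_it P u0 s k i))))
      = ereal (\<Sum>k=K0..K. (\<Sum>s\<in>seqs P K. z_step P u0 s k) / cs)"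
    by (simp add: Exp_ereal[OF nhat_ge_1] z_step_def cs_def sum_ereal)
  then show ?thesis unfolding initial_bound_eq_lyap0 using le by simp
qed

lemma expected_z_dist_bound:
  "Exp P K (\<lambda>s. ereal (Lnorm_sq P (\<lambda>i. z_it P u0 s (Suc K) i - ustar i)))
     \<le> ereal (1 - theta P 0) * (Dfun P u0 - Dfun P ustar) + ereal (Lnorm_sq P (\<lambda>i. u0 i - ustar i))"
  unfolding initial_bound_eq_lyap0 Exp_ereal_le_iff
  using sum_z_dist_bound nhat_ge_1 by (simp add: z_dist_def field_simps)

lemma expected_D_bound:
  "(Exp P K (\<lambda>s. Dfun P (u_it P u0 s (Suc K))) - Dfun P ustar) / ereal ((theta P K)\<^sup>2)
       + ereal ((real (nhat P))\<^sup>2) * Exp P K (\<lambda>s. ereal (Lnorm_sq P (\<lambda>i. z_it P u0 s (Suc K) i - ustar i)))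
     \<le> ereal ((real (nhat P))\<^sup>2) *
         (ereal (1 - theta P 0) * (Dfun P u0 - Dfun P ustar) + ereal (Lnorm_sq P (\<lambda>i. u0 i - ustar i)))"
proof -
  define Dr where "Dr s = dfun P (u_it P u0 s (Suc K)) + hsum P (u_it P u0 s (Suc K))" for s
  define cs where "cs = real (card (seqs P K))"
  have cs0: "0 < cs" using nhat_ge_1 by (simp add: cs_def card_seqs)
  have th: "0 < (theta P K)\<^sup>2" using theta_pos_nhat[of K] by simp
  have "Dfun P (u_it P u0 s (Suc K)) = ereal (Dr s)" if "s \<in> seqs P K" for s
    unfolding Dr_def using ardca_inv_hfun_u[OF ardca_inv_seqs[OF that]] by (intro Dfun_finite) auto
  then have ED: "Exp P K (\<lambda>s. Dfun P (u_it P u0 s (Suc K))) = ereal ((\<Sum>s\<in>seqs P K. Dr s) / cs)"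
    using Exp_ereal[OF nhat_ge_1, of K Dr] by (simp add: Exp_def cs_def cong: sum.cong)
  have EZ: "Exp P K (\<lambda>s. ereal (Lnorm_sq P (\<lambda>i. z_it P u0 s (Suc K) i - ustar i)))
      = ereal ((\<Sum>s\<in>seqs P K. z_dist P u0 ustar s (Suc K)) / cs)"
    using Exp_ereal[OF nhat_ge_1] by (simp add: z_dist_def cs_def)
  have "((\<Sum>s\<in>seqs P K. Dr s) / cs - Dopt) / (theta P K)\<^sup>2
      + (real (nhat P))\<^sup>2 * ((\<Sum>s\<in>seqs P K. z_dist P u0 ustar s (Suc K)) / cs)
      = (\<Sum>s\<in>seqs P K. (1 / (theta P K)\<^sup>2) * (Dr s - Dopt) + (real (nhat P))\<^sup>2 * z_dist P u0 ustar s (Suc K)) / cs"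
    using cs0 th by (simp add: sum.distrib sum_subtractf sum_distrib_left sum_divide_distrib[symmetric] cs_def field_simps)
  also have "\<dots> \<le> lyap0" using sum_D_bound cs0 by (simp add: Dr_def cs_def divide_le_eq mult.commute)
  finally have le: "((\<Sum>s\<in>seqs P K. Dr s) / cs - Dopt) / (theta P K)\<^sup>2
      + (real (nhat P))\<^sup>2 * ((\<Sum>s\<in>seqs P K. z_dist P u0 ustar s (Suc K)) / cs) \<le> lyap0" .
  have "ereal ((real (nhat P))\<^sup>2) * ereal (lyap0 / (real (nhat P))\<^sup>2) = ereal lyap0"
    using nhat_ge_1 by simp
  then show ?thesis unfolding initial_bound_eq_lyap0 unfolding ED EZ Dfun_ustar using le th by simp
qed

end

context ardca_problem
begin

lemma infinite_start_bounds:
  assumes ustar_min: "\<forall>w. Dfun P ustar \<le> Dfun P w"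
    and j: "j < nhat P" "hfun P j (u0 j) = \<infinity>" and N: "nhat P \<noteq> 1"
  shows "ereal (2 * ((real (nhat P))\<^sup>2 - real (nhat P))) * (Dfun P u0 - Dfun P ustar) = \<infinity>"
    and "ereal (1 - theta P 0) * (Dfun P u0 - Dfun P ustar) = \<infinity>"
proof -
  have "Dfun P ustar < \<infinity>" using exists_Dfun_finite ustar_min by (meson le_less_trans)
  then have diff: "Dfun P u0 - Dfun P ustar = \<infinity>" using Dfun_infinite[of j u0, OF j] by auto
  have N2: "2 \<le> real (nhat P)" using nhat_ge_1 N by simp
  then have "real (nhat P) < (real (nhat P))\<^sup>2" by (simp add: power2_eq_square)
  then show "ereal (2 * ((real (nhat P))\<^sup>2 - real (nhat P))) * (Dfun P u0 - Dfun P ustar) = \<infinity>"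
    unfolding diff by simp
  have "1 / real (nhat P) < 1" using N2 by simp
  then show "ereal (1 - theta P 0) * (Dfun P u0 - Dfun P ustar) = \<infinity>" unfolding diff using N by simp
qed

end

theorem lemma5:
  fixes P :: "'t::finite prob" and M :: real
    and ustar u0 u :: "nat \<Rightarrow> real" and K0 K :: nat
  assumes n_pos: "1 \<le> nn P"
    and mu_pos: "0 < mu P"
    and f_sc: "strongly_convex (mu P) (fobj P)"
    and phi_cvx: "\<forall>i < nn P. convex_on UNIV (phi P i) \<and> M-lipschitz_on UNIV (phi P i)"
    and g_cvx: "\<forall>i < mm P. convex_on UNIV (gc P i) \<and>
        (\<forall>x sg. (\<forall>y. gc P i x + sg \<bullet> (y - x) \<le> gc P i y) \<longrightarrow> norm sg \<le> Lg P i)"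
    and slater: "\<exists>x. (\<forall>j < pp P. Brow P j \<bullet> x + bv P j = 0) \<and> (\<forall>i < mm P. gc P i x < 0)"
    and finite_opt: "bdd_below {fobj P x + (\<Sum>i<nn P. phi P i (Acol P i \<bullet> x)) / real (nn P) | x.
        (\<forall>j < pp P. Brow P j \<bullet> x + bv P j = 0) \<and> (\<forall>i < mm P. gc P i x \<le> 0)}"
    and ustar_min: "\<forall>w. Dfun P ustar \<le> Dfun P w"
    and u0_dom: "in_dom P u0"
    and u_dom: "in_dom P u"
    and K0K: "K0 \<le> K"
  shows
    "(ereal (1 / (theta P K)\<^sup>2 - inv_theta_sq_prev P K0) *
       Exp P K (\<lambda>s. ereal (delta_inner P (xhat P u0 s K0 K) (yhat P u0 s K0 K) u
                           + fobj P (xhat P u0 s K0 K) + phisum P (yhat P u0 s K0 K) / real (nn P))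
                    + Dfun P ustar)
     \<le> ereal (2 * ((real (nhat P))\<^sup>2 - real (nhat P))) * (Dfun P u0 - Dfun P ustar)
       + ereal (2 * (real (nhat P))\<^sup>2 * Lnorm_sq P (\<lambda>i. u0 i - ustar i)
                + 2 * (real (nhat P))\<^sup>2 * Lnorm_sq P (\<lambda>i. u i - ustar i)))
  \<and>
    (ereal (1/2) * (\<Sum>k=K0..K. Exp P K (\<lambda>s. ereal (Lnorm_sq P (\<lambda>i. z_it P u0 s (Suc k) i - z_it P u0 s k i))))
     \<le> ereal (1 - theta P 0) * (Dfun P u0 - Dfun P ustar) + ereal (Lnorm_sq P (\<lambda>i. u0 i - ustar i)))
  \<and>
    (Exp P K (\<lambda>s. ereal (Lnorm_sq P (\<lambda>i. z_it P u0 s (Suc K) i - ustar i)))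
     \<le> ereal (1 - theta P 0) * (Dfun P u0 - Dfun P ustar) + ereal (Lnorm_sq P (\<lambda>i. u0 i - ustar i)))
  \<and>
    ((Exp P K (\<lambda>s. Dfun P (u_it P u0 s (Suc K))) - Dfun P ustar) / ereal ((theta P K)\<^sup>2)
       + ereal ((real (nhat P))\<^sup>2) * Exp P K (\<lambda>s. ereal (Lnorm_sq P (\<lambda>i. z_it P u0 s (Suc K) i - ustar i)))
     \<le> ereal ((real (nhat P))\<^sup>2) *
         (ereal (1 - theta P 0) * (Dfun P u0 - Dfun P ustar) + ereal (Lnorm_sq P (\<lambda>i. u0 i - ustar i))))"
proof -
  interpret ardca_problem P M using n_pos mu_pos f_sc phi_cvx g_cvx slater by unfold_locales
  show ?thesis
  proof (cases "(\<forall>j<nhat P. hfun P j (u0 j) < \<infinity>) \<or> nhat P = 1")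
    case True
    then interpret ardca_run P M u0 ustar using u0_dom ustar_min by unfold_locales
    show ?thesis
      using expected_gap_bound[OF u_dom K0K] expected_z_steps_bound expected_z_dist_bound expected_D_bound
      by blast
  next
    case False
    then obtain j where "j < nhat P" "hfun P j (u0 j) = \<infinity>" "nhat P \<noteq> 1"
      by (auto simp: top.not_eq_extremum)
    note infinite = infinite_start_bounds[of ustar j u0, OF ustar_min this]
    show ?thesis unfolding infinite using nhat_ge_1 by simp
  qed
qed

end
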